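(* Let $\{V_q\}_{q\ge1}$ be approximation spaces with $\bigcup_qV_q$ dense in $H^1_0(D)$ and $\{W_p\}_{p\ge1}$ with $\bigcup_pW_p$ dense in $L^2_\Gamma(\mathbb{R}^\mu)$, and set $X_N=V_q\otimes W_p$. For $\tau>0$ let $W_p^\tau=\{I_{\gamma\le\tau}\varphi:\varphi\in W_p\}$, where $I_{\gamma\le\tau}(\mathbf{y},\mathbf{z})=1$ if $\gamma(\mathbf{y},\mathbf{z})\le\tau$ and $0$ otherwise, let $X_N^\tau=V_q\otimes W_p^\tau$, and let $u_N^\tau\in X_N^\tau$ be the Galerkin approximation: $a(u_N^\tau,v)=F(v)$ for all $v\in X_N^\tau$. Then $$\|u-u_N^\tau\|_{X^{(\mathbf{C})}}^2\le\tau\inf_{v\in X_N}\|u-v\|_X^2+\|u\,I_{\gamma>\tau}\|_{X^{(\mathbf{C})}}^2,$$ where $u\in X$ is the solution of $a(u,v)=F(v)$ for all $v\in X$ and $I_{\gamma>\tau}=1-I_{\gamma\le\tau}$; and there exists a sequence of approximation spaces $X_{N(\tau)}^\tau=V_{q(\tau)}\otimes W_{p(\tau)}^\tau$ such that $\|u-u_{N(\tau)}^\tau\|_{X^{(\mathbf{C})}}\to0$ as $\tau\to\infty$.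
   Context: $D\subset\mathbb{R}^d$ bounded open with smooth boundary; $f\in H^{-1}(D)$; $\Gamma=\Gamma_{N_g}\otimes\Gamma_\nu$ a product probability measure on $\mathbb{R}^\mu=\mathbb{R}^{N_g}\times\mathbb{R}^\nu$, $E_\Gamma$ integration against it. $[\mathrm{C}]:D\times\mathbb{R}^\mu\to\mathbb{M}_n^+(\mathbb{R})$ measurable (the parameterized random field coefficient in the paper, either exponential or square type) with a constant $\alpha>0$ and a positive measurable $\gamma<\infty$ on $\mathbb{R}^\mu$ such that $\Gamma$-a.e. and a.e. in $\mathbf{x}$, $\alpha\|\mathbf{h}\|_2^2\le\langle[\mathrm{C}]\mathbf{h},\mathbf{h}\rangle_2\le\gamma\|\mathbf{h}\|_2^2$ for all $\mathbf{h}$. $X=H^1_0(D)\otimes L^2_\Gamma(\mathbb{R}^\mu)$ with $\|v\|_X^2=E_\Gamma(\int_D\|\nabla v\|_2^2d\mathbf{x})$; $a(u,v)=E_\Gamma(\int_D\nabla v\cdot[\mathrm{C}]\nabla u\,d\mathbf{x})$; $F(v)=E_\Gamma(f(v))$; $\|v\|_{X^{(\mathbf{C})}}^2=E_\Gamma(\int_D\nabla v\cdot[\mathrm{C}]\nabla v\,d\mathbf{x})$. *)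

theory Defs
  imports "HOL-Probability.Probability"
begin

definition pd :: "'n::finite \<Rightarrow> (real^'n \<Rightarrow> real) \<Rightarrow> real^'n \<Rightarrow> real" where
  "pd i f x = frechet_derivative f (at x) (axis i 1)"

fun pds :: "'n::finite list \<Rightarrow> (real^'n \<Rightarrow> real) \<Rightarrow> real^'n \<Rightarrow> real" where
  "pds [] f = f"
| "pds (i # is) f = pd i (pds is f)"

definition smooth_fun :: "(real^'n::finite \<Rightarrow> real) \<Rightarrow> bool" where
  "smooth_fun f \<longleftrightarrow> (\<forall>is x. pds is f differentiable (at x))"

definition grad :: "(real^'n::finite \<Rightarrow> real) \<Rightarrow> real^'n \<Rightarrow> real^'n" where
  "grad f x = (\<chi> i. pd i f x)"

definition Cc_inf :: "(real^'n::finite) set \<Rightarrow> (real^'n \<Rightarrow> real) set" where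
  "Cc_inf D = {\<phi>. smooth_fun \<phi> \<and> (\<exists>K. compact K \<and> K \<subseteq> D \<and> (\<forall>x. x \<notin> K \<longrightarrow> \<phi> x = 0))}"

text \<open>Smooth boundary via a global smooth defining function with nonvanishing gradient.\<close>
definition smooth_boundary :: "(real^'n::finite) set \<Rightarrow> bool" where
  "smooth_boundary D \<longleftrightarrow>
     (\<exists>\<rho>. smooth_fun \<rho> \<and> D = {x. \<rho> x < 0} \<and> (\<forall>x. \<rho> x = 0 \<longrightarrow> grad \<rho> x \<noteq> 0))"

definition MD :: "(real^'n::finite) set \<Rightarrow> (real^'n) measure" where
  "MD D = restrict_space lborel D"

text \<open>Elements of H^1_0(D) are represented by pairs (v, grad v).\<close>
definition H1sq :: "(real^'n::finite) set \<Rightarrow> (real^'n \<Rightarrow> real) \<times> (real^'n \<Rightarrow> real^'n) \<Rightarrow> ennreal" where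
  "H1sq D vg = (\<integral>\<^sup>+ x. ennreal ((fst vg x)\<^sup>2 + (norm (snd vg x))\<^sup>2) \<partial>MD D)"

definition H10 :: "(real^'n::finite) set \<Rightarrow> ((real^'n \<Rightarrow> real) \<times> (real^'n \<Rightarrow> real^'n)) set" where
  "H10 D = {(v, g). v \<in> borel_measurable lborel \<and> g \<in> borel_measurable lborel \<and>
     (\<exists>\<phi>. (\<forall>k. \<phi> k \<in> Cc_inf D) \<and>
        (\<lambda>k. H1sq D (\<lambda>x. \<phi> k x - v x, \<lambda>x. grad (\<phi> k) x - g x)) \<longlonglongrightarrow> 0)}"

definition H_minus1 :: "(real^'n::finite) set \<Rightarrow> ((real^'n \<Rightarrow> real) \<Rightarrow> (real^'n \<Rightarrow> real^'n) \<Rightarrow> real) \<Rightarrow> bool" where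
  "H_minus1 D f \<longleftrightarrow>
     (\<forall>v g w h a b. (v, g) \<in> H10 D \<longrightarrow> (w, h) \<in> H10 D \<longrightarrow>
        f (\<lambda>x. a * v x + b * w x) (\<lambda>x. a *\<^sub>R g x + b *\<^sub>R h x) = a * f v g + b * f w h) \<and>
     (\<exists>M. \<forall>(v, g) \<in> H10 D. \<bar>f v g\<bar> \<le> M * sqrt (enn2real (H1sq D (v, g))))"

definition L2 :: "'w measure \<Rightarrow> ('w \<Rightarrow> real) set" where
  "L2 \<Gamma> = {\<psi>. \<psi> \<in> borel_measurable \<Gamma> \<and> (\<integral>\<^sup>+ \<omega>. ennreal ((\<psi> \<omega>)\<^sup>2) \<partial>\<Gamma>) < \<infinity>}"

type_synonym ('n, 'w) field = "(real^'n \<Rightarrow> 'w \<Rightarrow> real) \<times> (real^'n \<Rightarrow> 'w \<Rightarrow> real^'n)"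

text \<open>Elements of X = H^1_0(D) (x) L^2_Gamma are pairs (v, grad_x v).\<close>
definition pdiff :: "('n::finite, 'w) field \<Rightarrow> ('n, 'w) field \<Rightarrow> ('n, 'w) field" where
  "pdiff U W = (\<lambda>x \<omega>. fst U x \<omega> - fst W x \<omega>, \<lambda>x \<omega>. snd U x \<omega> - snd W x \<omega>)"

definition tens :: "nat \<Rightarrow> (nat \<Rightarrow> (real^'n::finite \<Rightarrow> real) \<times> (real^'n \<Rightarrow> real^'n)) \<Rightarrow> (nat \<Rightarrow> 'w \<Rightarrow> real) \<Rightarrow> ('n, 'w) field" where
  "tens m \<phi> \<psi> = (\<lambda>x \<omega>. \<Sum>i<m. fst (\<phi> i) x * \<psi> i \<omega>, \<lambda>x \<omega>. \<Sum>i<m. \<psi> i \<omega> *\<^sub>R snd (\<phi> i) x)"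

definition tensor :: "((real^'n::finite \<Rightarrow> real) \<times> (real^'n \<Rightarrow> real^'n)) set \<Rightarrow> ('w \<Rightarrow> real) set \<Rightarrow> ('n, 'w) field set" where
  "tensor V W = {tens m \<phi> \<psi> | m \<phi> \<psi>. (\<forall>i<m. \<phi> i \<in> V) \<and> (\<forall>i<m. \<psi> i \<in> W)}"

definition Xfullsq :: "(real^'n::finite) set \<Rightarrow> 'w measure \<Rightarrow> ('n, 'w) field \<Rightarrow> ennreal" where
  "Xfullsq D \<Gamma> U = (\<integral>\<^sup>+ \<omega>. \<integral>\<^sup>+ x. ennreal ((fst U x \<omega>)\<^sup>2 + (norm (snd U x \<omega>))\<^sup>2) \<partial>MD D \<partial>\<Gamma>)"

definition Xspace :: "(real^'n::finite) set \<Rightarrow> 'w measure \<Rightarrow> ('n, 'w) field set" where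
  "Xspace D \<Gamma> = {U. (\<lambda>(x, \<omega>). fst U x \<omega>) \<in> borel_measurable (lborel \<Otimes>\<^sub>M \<Gamma>) \<and>
      (\<lambda>(x, \<omega>). snd U x \<omega>) \<in> borel_measurable (lborel \<Otimes>\<^sub>M \<Gamma>) \<and>
      (\<exists>S. (\<forall>k. S k \<in> tensor ((\<lambda>\<phi>. (\<phi>, grad \<phi>)) ` Cc_inf D) (L2 \<Gamma>)) \<and>
           (\<lambda>k. Xfullsq D \<Gamma> (pdiff U (S k))) \<longlonglongrightarrow> 0)}"

definition normXsq :: "(real^'n::finite) set \<Rightarrow> 'w measure \<Rightarrow> ('n, 'w) field \<Rightarrow> ennreal" where
  "normXsq D \<Gamma> U = (\<integral>\<^sup>+ \<omega>. \<integral>\<^sup>+ x. ennreal ((norm (snd U x \<omega>))\<^sup>2) \<partial>MD D \<partial>\<Gamma>)"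

definition normCsq :: "(real^'n::finite) set \<Rightarrow> 'w measure \<Rightarrow> (real^'n \<Rightarrow> 'w \<Rightarrow> real^'n^'n) \<Rightarrow> ('n, 'w) field \<Rightarrow> ennreal" where
  "normCsq D \<Gamma> C U = (\<integral>\<^sup>+ \<omega>. \<integral>\<^sup>+ x. ennreal (snd U x \<omega> \<bullet> (C x \<omega> *v snd U x \<omega>)) \<partial>MD D \<partial>\<Gamma>)"

definition a_integrable :: "(real^'n::finite) set \<Rightarrow> 'w measure \<Rightarrow> (real^'n \<Rightarrow> 'w \<Rightarrow> real^'n^'n) \<Rightarrow> ('n, 'w) field \<Rightarrow> ('n, 'w) field \<Rightarrow> bool" where
  "a_integrable D \<Gamma> C U W \<longleftrightarrow>
     integrable (MD D \<Otimes>\<^sub>M \<Gamma>) (\<lambda>(x, \<omega>). snd W x \<omega> \<bullet> (C x \<omega> *v snd U x \<omega>))"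

definition a_form :: "(real^'n::finite) set \<Rightarrow> 'w measure \<Rightarrow> (real^'n \<Rightarrow> 'w \<Rightarrow> real^'n^'n) \<Rightarrow> ('n, 'w) field \<Rightarrow> ('n, 'w) field \<Rightarrow> real" where
  "a_form D \<Gamma> C U W = (\<integral> \<omega>. (\<integral> x. snd W x \<omega> \<bullet> (C x \<omega> *v snd U x \<omega>) \<partial>MD D) \<partial>\<Gamma>)"

definition F_form :: "'w measure \<Rightarrow> ((real^'n::finite \<Rightarrow> real) \<Rightarrow> (real^'n \<Rightarrow> real^'n) \<Rightarrow> real) \<Rightarrow> ('n, 'w) field \<Rightarrow> real" where
  "F_form \<Gamma> f W = (\<integral> \<omega>. f (\<lambda>x. fst W x \<omega>) (\<lambda>x. snd W x \<omega>) \<partial>\<Gamma>)"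

definition galerkin_sol :: "(real^'n::finite) set \<Rightarrow> 'w measure \<Rightarrow> (real^'n \<Rightarrow> 'w \<Rightarrow> real^'n^'n) \<Rightarrow>
    ((real^'n \<Rightarrow> real) \<Rightarrow> (real^'n \<Rightarrow> real^'n) \<Rightarrow> real) \<Rightarrow> ('n, 'w) field set \<Rightarrow> ('n, 'w) field \<Rightarrow> bool" where
  "galerkin_sol D \<Gamma> C f S U \<longleftrightarrow> U \<in> S \<and>
     (\<forall>W \<in> S. a_integrable D \<Gamma> C U W \<and> a_form D \<Gamma> C U W = F_form \<Gamma> f W)"

definition fd_subspace :: "((real^'n::finite \<Rightarrow> real) \<times> (real^'n \<Rightarrow> real^'n)) set \<Rightarrow> bool" where
  "fd_subspace V \<longleftrightarrow> (\<exists>(k::nat) b. V = {(\<lambda>x. \<Sum>i<k. c i * fst (b i) x, \<lambda>x. \<Sum>i<k. c i *\<^sub>R snd (b i) x) | c. True})"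

definition fd_fspace :: "('w \<Rightarrow> real) set \<Rightarrow> bool" where
  "fd_fspace W \<longleftrightarrow> (\<exists>(k::nat) b. W = {(\<lambda>\<omega>. \<Sum>i<k. c i * b i \<omega>) | c. True})"

definition trunc_space :: "('w \<Rightarrow> real) \<Rightarrow> real \<Rightarrow> ('w \<Rightarrow> real) set \<Rightarrow> ('w \<Rightarrow> real) set" where
  "trunc_space \<gamma> \<tau> W = (\<lambda>\<phi> \<omega>. indicator {\<omega>. \<gamma> \<omega> \<le> \<tau>} \<omega> * \<phi> \<omega>) ` W"

definition cut_above :: "('w \<Rightarrow> real) \<Rightarrow> real \<Rightarrow> ('n::finite, 'w) field \<Rightarrow> ('n, 'w) field" where
  "cut_above \<gamma> \<tau> U = (\<lambda>x \<omega>. indicator {\<omega>. \<gamma> \<omega> > \<tau>} \<omega> * fst U x \<omega>,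
                        \<lambda>x \<omega>. indicator {\<omega>. \<gamma> \<omega> > \<tau>} \<omega> *\<^sub>R snd U x \<omega>)"

end

(* Galerkin orthogonality makes u_N^tau the best approximation of u, in the energy norm, among
   the elements of the truncated tensor space.  Comparing with the truncation I_{gamma <= tau} v of
   any v in X_N, the error integrand is at most tau |grad (u - v)|^2 where gamma <= tau and equals
   the energy density of u where gamma > tau; this is the estimate.  By density of the tensor
   spaces, X_N can be chosen with inf ||u - v||_X^2 < tau^-2, so the first term is at most 1/tau,
   while the energy of u on {gamma > tau} tends to 0 by dominated convergence.  The discrete
   problems are solvable because their Gram matrices are symmetric positive semidefinite and the
   load annihilates their null vectors. *)

theory Submission
  imports Defs
begin

lemma inner_matrix_vector_symmetric:
  fixes A :: "real^'n::finite^'n"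
  assumes "transpose A = A"
  shows "h \<bullet> (A *v k) = k \<bullet> (A *v h)"
proof -
  have "h \<bullet> (A *v k) = (h v* A) \<bullet> k" by (simp add: dot_lmul_matrix)
  also have "h v* A = transpose A *v h" by simp
  finally show ?thesis using assms by (simp add: inner_commute)
qed

lemma symmetric_quadratic_form_combination:
  fixes A :: "real^'n::finite^'n"
  assumes "transpose A = A"
  shows "(c *\<^sub>R h + f *\<^sub>R k) \<bullet> (A *v (a *\<^sub>R h + b *\<^sub>R k)) =
     a*c*(h \<bullet> (A *v h)) + (a*f + b*c)*(k \<bullet> (A *v h)) + b*f*(k \<bullet> (A *v k))"
  using inner_matrix_vector_symmetric[OF assms, of h k]
  by (simp add: algebra_simps inner_add_left inner_add_right matrix_vector_right_distrib
      matrix_vector_mult_scaleR)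

lemma matrix_vector_mult_sum: "A *v (\<Sum>n\<in>I. v n) = (\<Sum>n\<in>I. A *v v n)"
  by (induction I rule: infinite_finite_induct) (auto simp: matrix_vector_right_distrib)

lemma borel_measurable_matrix_vector_mult[measurable (raw)]:
  fixes A :: "'a \<Rightarrow> real^'n::finite^'m::finite"
  assumes "A \<in> borel_measurable M" "f \<in> borel_measurable M"
  shows "(\<lambda>z. A z *v f z) \<in> borel_measurable M"
proof (rule borel_measurable_continuous_Pair[OF assms])
  show "continuous_on UNIV (\<lambda>p::(real^'n^'m) \<times> (real^'n). fst p *v snd p)"
    unfolding matrix_vector_mult_def by (intro continuous_intros)
qed

lemma power2_norm_sum_le:
  fixes g :: "'a \<Rightarrow> 'b::real_normed_vector"
  shows "(norm (\<Sum>i\<in>I. g i))\<^sup>2 \<le> real (card I) * (\<Sum>i\<in>I. (norm (g i))\<^sup>2)"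
proof -
  have "(norm (\<Sum>i\<in>I. g i))\<^sup>2 \<le> (\<Sum>i\<in>I. norm (g i))\<^sup>2"
    by (simp add: norm_sum power_mono)
  also have "\<dots> \<le> real (card I) * (\<Sum>i\<in>I. (norm (g i))\<^sup>2)"
    using sum_squared_le_sum_of_squares[of "\<lambda>i. norm (g i)" I] by (simp add: mult.commute)
  finally show ?thesis .
qed

lemma power2_norm_add_le:
  fixes x y :: "'a::real_normed_vector"
  shows "(norm (x + y))\<^sup>2 \<le> 2 * (norm x)\<^sup>2 + 2 * (norm y)\<^sup>2"
proof -
  have "(norm (x + y))\<^sup>2 \<le> (norm x + norm y)\<^sup>2" by (simp add: norm_triangle_ineq power_mono)
  also have "\<dots> \<le> 2 * (norm x)\<^sup>2 + 2 * (norm y)\<^sup>2"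
    using zero_le_power2[of "norm x - norm y"] by (simp add: power2_eq_square algebra_simps)
  finally show ?thesis .
qed

lemma ennreal_le_mult_INF_add:
  fixes g :: "'a \<Rightarrow> ennreal"
  assumes bound: "\<forall>v\<in>T. X \<le> ennreal \<tau> * g v + R" and tau: "\<tau> > 0"
  shows "X \<le> ennreal \<tau> * (INF v\<in>T. g v) + R"
proof (rule ennreal_le_epsilon)
  fix e :: real assume fin: "ennreal \<tau> * (INF v\<in>T. g v) + R < top" and e: "0 < e"
  have "(INF v\<in>T. g v) \<noteq> \<infinity>"
  proof
    assume "(INF v\<in>T. g v) = \<infinity>"
    then have "ennreal \<tau> * (INF v\<in>T. g v) = \<infinity>" using tau by (simp add: ennreal_mult_eq_top_iff)
    with fin show False by simp
  qed
  moreover have "e / \<tau> > 0" using e tau by simp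
  ultimately obtain v where v: "v \<in> T" "g v < (INF v\<in>T. g v) + ennreal (e / \<tau>)"
    using INF_approx_ennreal by blast
  have "X \<le> ennreal \<tau> * g v + R" using bound v(1) by blast
  also have "\<dots> \<le> ennreal \<tau> * ((INF v\<in>T. g v) + ennreal (e / \<tau>)) + R"
    using v(2) by (intro add_mono mult_left_mono) auto
  also have "\<dots> = ennreal \<tau> * (INF v\<in>T. g v) + R + ennreal \<tau> * ennreal (e / \<tau>)"
    by (simp add: distrib_left ac_simps)
  also have "ennreal \<tau> * ennreal (e / \<tau>) = ennreal e"
    using tau e by (simp add: ennreal_mult[symmetric])
  finally show "X \<le> ennreal \<tau> * (INF v\<in>T. g v) + R + ennreal e" .
qed

lemma ennreal_mult_le_of_less_div:
  assumes "X < ennreal (\<delta> / (enn2real B + 1))" "B < \<infinity>" "0 \<le> \<delta>"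
  shows "X * B \<le> ennreal \<delta>"
proof -
  obtain b where b: "B = ennreal b" "0 \<le> b" using assms(2) by (cases B) auto
  have "X \<le> ennreal (\<delta> / (b + 1))" using assms(1) b by simp
  then have "X * B \<le> ennreal (\<delta> / (b + 1)) * ennreal b"
    unfolding b(1) by (rule mult_right_mono) simp
  also have "\<dots> = ennreal (\<delta> * (b / (b + 1)))"
    using assms(3) b by (simp add: ennreal_mult'[symmetric])
  also have "\<delta> * (b / (b + 1)) \<le> \<delta>"
    using assms(3) b by (intro mult_left_le) auto
  finally show ?thesis by (simp add: ennreal_leI order_trans)
qed

lemma ennreal_double_add_less:
  assumes "b \<le> ennreal (\<epsilon> / 4)" "a < ennreal (\<epsilon> / 4)" "x \<le> 2 * a + 2 * b" "0 < \<epsilon>"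
  shows "x < ennreal \<epsilon>"
proof -
  obtain r where r: "a = ennreal r" "0 \<le> r" "r < \<epsilon> / 4"
    using assms(2) by (cases a rule: ennreal_cases) (auto simp: ennreal_less_iff)
  have "2 * a + 2 * b \<le> 2 * ennreal r + 2 * ennreal (\<epsilon> / 4)"
    using assms(1) r(1) by (intro add_mono mult_left_mono) auto
  then have "x \<le> 2 * ennreal r + 2 * ennreal (\<epsilon> / 4)" using assms(3) by (rule order_trans[rotated])
  also have "\<dots> = ennreal (2 * r + 2 * (\<epsilon> / 4))"
  proof -
    have "ennreal (2 * r + 2 * (\<epsilon> / 4)) = ennreal (2 * r) + ennreal (2 * (\<epsilon> / 4))"
      using r(2) assms(4) by (intro ennreal_plus) auto
    also have "ennreal (2 * r) = 2 * ennreal r" using r(2) by (simp add: ennreal_mult)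
    also have "ennreal (2 * (\<epsilon> / 4)) = 2 * ennreal (\<epsilon> / 4)" using ennreal_mult[of 2 "\<epsilon> / 4"] assms(4) by simp
    finally show ?thesis by simp
  qed
  also have "\<dots> < ennreal \<epsilon>" using r assms(4) by (intro ennreal_lessI) auto
  finally show ?thesis .
qed

section \<open>Positive semidefinite Gram systems\<close>

definition gram_quadratic :: "'i set \<Rightarrow> ('i \<Rightarrow> 'i \<Rightarrow> real) \<Rightarrow> ('i \<Rightarrow> real) \<Rightarrow> real" where
  "gram_quadratic I G a = (\<Sum>n\<in>I. \<Sum>m\<in>I. a n * a m * G n m)"

lemma gram_quadratic_fun_upd_insert:
  assumes "finite J" "N \<notin> J"
  shows "gram_quadratic (insert N J) G (a(N:=t)) =
     t * t * G N N + t * (\<Sum>m\<in>J. a m * G N m) + t * (\<Sum>n\<in>J. a n * G n N) + gram_quadratic J G a"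
proof -
  have upd: "(\<Sum>m\<in>J. (a(N:=t)) m * g m) = (\<Sum>m\<in>J. a m * g m)" for g :: "_ \<Rightarrow> real"
    using assms by (intro sum.cong) auto
  have "gram_quadratic (insert N J) G (a(N:=t)) =
      (\<Sum>n\<in>insert N J. (a(N:=t)) n * (\<Sum>m\<in>insert N J. (a(N:=t)) m * G n m))"
    unfolding gram_quadratic_def by (simp add: sum_distrib_left mult.assoc)
  also have "\<dots> = t * (t * G N N + (\<Sum>m\<in>J. a m * G N m)) +
      (\<Sum>n\<in>J. a n * (t * G n N + (\<Sum>m\<in>J. a m * G n m)))"
    using assms by (simp add: upd fun_upd_same del: fun_upd_apply)
  also have "\<dots> = t * t * G N N + t * (\<Sum>m\<in>J. a m * G N m) + t * (\<Sum>n\<in>J. a n * G n N) + gram_quadratic J G a"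
    by (simp add: gram_quadratic_def distrib_left sum.distrib sum_distrib_left algebra_simps)
  finally show ?thesis .
qed

lemma nonneg_quadratic_imp_linear_zero:
  fixes g s :: real
  assumes "\<And>t. 0 \<le> t * t * g + 2 * t * s"
  shows "s = 0"
proof (rule ccontr)
  assume "s \<noteq> 0"
  have "0 \<le> g" using assms[of 1] assms[of "-1"] by linarith
  define t where "t = - s / (g + 1)"
  have "t * (g + 1) = - s" using \<open>0 \<le> g\<close> by (simp add: t_def)
  have "(t * t * g + 2 * t * s) * ((g + 1) * (g + 1))
      = (t * (g + 1)) * (t * (g + 1)) * g + 2 * (t * (g + 1)) * s * (g + 1)"
    by (simp add: algebra_simps)
  also have "\<dots> = - (s * s * (g + 2))"
    using \<open>t * (g + 1) = - s\<close> by (simp add: algebra_simps)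
  finally have "(t * t * g + 2 * t * s) * ((g + 1) * (g + 1)) = - (s * s * (g + 2))" .
  moreover have "0 \<le> (t * t * g + 2 * t * s) * ((g + 1) * (g + 1))"
    using assms[of t] \<open>0 \<le> g\<close> by simp
  ultimately show False using \<open>s \<noteq> 0\<close> \<open>0 \<le> g\<close>
    by (smt (verit) mult_pos_pos not_real_square_gt_zero)
qed

lemma gram_column_annihilates_null:
  assumes fin: "finite J" "N \<notin> J" and sym: "\<forall>n m. G n m = G m n"
    and psd: "\<forall>a. 0 \<le> gram_quadratic (insert N J) G a"
    and null: "gram_quadratic J G a = 0"
  shows "(\<Sum>m\<in>J. a m * G N m) = 0"
proof (rule nonneg_quadratic_imp_linear_zero)
  fix t
  have "(\<Sum>n\<in>J. a n * G n N) = (\<Sum>m\<in>J. a m * G N m)" using sym by (intro sum.cong) auto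
  then show "0 \<le> t * t * G N N + 2 * t * (\<Sum>m\<in>J. a m * G N m)"
    using psd[rule_format, of "a(N:=t)"] gram_quadratic_fun_upd_insert[OF fin, of G a t] null by simp
qed

text \<open>The vector z below is G-orthogonal to all old unknowns: if its
  energy \<kappa> vanishes, z is a null vector and the new equation follows from the old ones;
  otherwise adding a multiple of z to the old solution fixes the new equation.\<close>

lemma gram_system_solvable:
  assumes "finite I" and sym: "\<forall>n m. G n m = G m n"
    and "\<forall>a. 0 \<le> gram_quadratic I G a"
    and "\<forall>a. gram_quadratic I G a = 0 \<longrightarrow> (\<Sum>m\<in>I. a m * F m) = 0"
  shows "\<exists>a. \<forall>m\<in>I. (\<Sum>n\<in>I. a n * G n m) = F m"
  using assms(1,3,4)
proof (induction I arbitrary: F rule: finite_induct)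
  case empty
  then show ?case by simp
next
  case (insert N J)
  let ?I = "insert N J"
  have restrict: "gram_quadratic ?I G (a(N:=0)) = gram_quadratic J G a" for a
    using gram_quadratic_fun_upd_insert[OF insert(1,2), of G a 0] by simp
  have restrict_lin: "(\<Sum>m\<in>?I. (a(N:=0)) m * g m) = (\<Sum>m\<in>J. a m * g m)" for a g :: "'a \<Rightarrow> real"
  proof -
    have "(\<Sum>m\<in>J. (a(N:=0)) m * g m) = (\<Sum>m\<in>J. a m * g m)"
      using insert(2) by (intro sum.cong) auto
    then show ?thesis using insert(1,2) by simp
  qed
  have psdJ: "\<forall>a. 0 \<le> gram_quadratic J G a"
    using insert.prems(1) by (metis restrict)
  have "\<forall>a. gram_quadratic J G a = 0 \<longrightarrow> (\<Sum>m\<in>J. a m * F m) = 0"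
    using insert.prems(2) by (metis restrict restrict_lin)
  then obtain x where x: "\<forall>m\<in>J. (\<Sum>n\<in>J. x n * G n m) = F m"
    using insert.IH psdJ by blast
  have "\<forall>a. gram_quadratic J G a = 0 \<longrightarrow> (\<Sum>m\<in>J. a m * G N m) = 0"
    using gram_column_annihilates_null[OF insert(1,2) sym insert.prems(1)] by blast
  then obtain y where y: "\<forall>m\<in>J. (\<Sum>n\<in>J. y n * G n m) = G N m"
    using insert.IH psdJ by blast
  define z where "z = (\<lambda>n. if n = N then 1 else - y n)"
  have zJ: "(\<Sum>n\<in>?I. z n * G n m) = 0" if "m \<in> J" for m
  proof -
    have "(\<Sum>n\<in>J. z n * G n m) = - (\<Sum>n\<in>J. y n * G n m)"
      using insert(2) by (simp add: z_def sum_negf[symmetric], intro sum.cong) auto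
    then show ?thesis using insert(1,2) y that by (simp add: z_def)
  qed
  define \<kappa> where "\<kappa> = (\<Sum>n\<in>?I. z n * G n N)"
  have Qz: "gram_quadratic ?I G z = \<kappa>"
  proof -
    have "gram_quadratic ?I G z = (\<Sum>m\<in>?I. z m * (\<Sum>n\<in>?I. z n * G n m))"
      unfolding gram_quadratic_def by (subst sum.swap) (simp add: sum_distrib_left algebra_simps)
    also have "\<dots> = z N * \<kappa>" using insert(1,2) zJ by (simp add: \<kappa>_def)
    finally show ?thesis by (simp add: z_def)
  qed
  define x' where "x' = x(N:=0)"
  have x': "(\<Sum>n\<in>?I. x' n * G n m) = (\<Sum>n\<in>J. x n * G n m)" for m
    unfolding x'_def by (rule restrict_lin)
  show ?case
  proof (cases "\<kappa> = 0")
    case False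
    define r where "r = F N - (\<Sum>n\<in>J. x n * G n N)"
    define a where "a = (\<lambda>n. x' n + (r/\<kappa>) * z n)"
    have "(\<Sum>n\<in>?I. a n * G n m) = (\<Sum>n\<in>J. x n * G n m) + (r/\<kappa>) * (\<Sum>n\<in>?I. z n * G n m)" for m
      unfolding a_def x'[symmetric] by (simp add: distrib_right sum.distrib sum_distrib_left mult.assoc)
    then have "\<forall>m\<in>?I. (\<Sum>n\<in>?I. a n * G n m) = F m"
      using x zJ False by (auto simp: \<kappa>_def[symmetric] r_def)
    then show ?thesis by blast
  next
    case True
    then have "(\<Sum>m\<in>?I. z m * F m) = 0" using insert.prems(2) Qz by simp
    then have FN: "F N = (\<Sum>m\<in>J. y m * F m)"
      using insert(1,2) by (simp add: z_def, subst (asm) sum.cong[OF refl, of _ _ "\<lambda>m. - (y m * F m)"])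
        (auto simp: sum_negf)
    have "(\<Sum>m\<in>J. y m * F m) = (\<Sum>m\<in>J. y m * (\<Sum>n\<in>J. x n * G n m))" using x by simp
    also have "\<dots> = (\<Sum>n\<in>J. x n * (\<Sum>m\<in>J. y m * G m n))"
      using sym by (simp add: sum_distrib_left algebra_simps, subst sum.swap) simp
    also have "\<dots> = (\<Sum>n\<in>J. x n * G n N)" using y sym by simp
    finally have "\<forall>m\<in>?I. (\<Sum>n\<in>?I. x' n * G n m) = F m" using x FN x' by auto
    then show ?thesis by blast
  qed
qed

section \<open>Test functions and \<open>H\<^sup>1\<^sub>0(D)\<close>\<close>

lemma Cc_inf_pds_differentiable: "\<phi> \<in> Cc_inf D \<Longrightarrow> pds is \<phi> differentiable (at x)"
  unfolding Cc_inf_def smooth_fun_def by blast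

lemma Cc_inf_continuous:
  assumes "\<phi> \<in> Cc_inf D"
  shows "continuous_on UNIV \<phi>"
proof -
  have "\<phi> differentiable (at x)" for x using Cc_inf_pds_differentiable[OF assms, of "[]"] by simp
  then show ?thesis by (meson continuous_at_imp_continuous_on differentiable_imp_continuous_within)
qed

lemma Cc_inf_grad_continuous:
  assumes "\<phi> \<in> Cc_inf D"
  shows "continuous_on UNIV (grad \<phi>)"
proof -
  have "pd i \<phi> differentiable (at x)" for i x using Cc_inf_pds_differentiable[OF assms, of "[i]"] by simp
  then have "continuous_on UNIV (pd i \<phi>)" for i
    by (meson continuous_at_imp_continuous_on differentiable_imp_continuous_within)
  then show ?thesis unfolding grad_def by (intro continuous_on_vec_lambda) auto
qed

lemma Cc_inf_borel_measurable: "\<phi> \<in> Cc_inf D \<Longrightarrow> \<phi> \<in> borel_measurable lborel"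
  using borel_measurable_continuous_onI[OF Cc_inf_continuous] by simp

lemma Cc_inf_grad_borel_measurable: "\<phi> \<in> Cc_inf D \<Longrightarrow> grad \<phi> \<in> borel_measurable lborel"
  using borel_measurable_continuous_onI[OF Cc_inf_grad_continuous] by simp

lemma Cc_inf_support:
  assumes "\<phi> \<in> Cc_inf D"
  obtains K where "compact K" "K \<subseteq> D" "\<And>x. x \<notin> K \<Longrightarrow> \<phi> x = 0" "\<And>x. x \<notin> K \<Longrightarrow> grad \<phi> x = 0"
proof -
  from assms obtain K where K: "compact K" "K \<subseteq> D" "\<And>x. x \<notin> K \<Longrightarrow> \<phi> x = 0"
    unfolding Cc_inf_def by auto
  have "grad \<phi> x = 0" if x: "x \<notin> K" for x
  proof -
    have "open (- K)" using K(1) by (simp add: compact_imp_closed open_Compl)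
    have "((\<lambda>_. 0::real) has_derivative (\<lambda>h. 0)) (at x)" by simp
    then have "(\<phi> has_derivative (\<lambda>h. 0)) (at x)"
      by (rule has_derivative_transform_within_open[OF _ \<open>open (- K)\<close>]) (use x K in auto)
    then have "frechet_derivative \<phi> (at x) = (\<lambda>h. 0)" by (metis frechet_derivative_at)
    then show ?thesis by (simp add: grad_def pd_def vec_eq_iff)
  qed
  with K show ?thesis using that by blast
qed

lemma borel_measurable_MD: "f \<in> borel_measurable lborel \<Longrightarrow> f \<in> borel_measurable (MD D)"
  unfolding MD_def by (rule measurable_restrict_space1)

lemma AE_MD_iff: "open D \<Longrightarrow> (AE x in MD D. P x) \<longleftrightarrow> (AE x in lborel. x \<in> D \<longrightarrow> P x)"
  unfolding MD_def by (rule AE_restrict_space_iff) simp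

lemma H1sq_Cc_inf_finite:
  assumes "\<phi> \<in> Cc_inf D" "open D"
  shows "H1sq D (\<phi>, grad \<phi>) < \<infinity>"
proof -
  obtain K where K: "compact K" "K \<subseteq> D" "\<And>x. x \<notin> K \<Longrightarrow> \<phi> x = 0" "\<And>x. x \<notin> K \<Longrightarrow> grad \<phi> x = 0"
    using Cc_inf_support[OF assms(1)] by blast
  define f where "f = (\<lambda>x. (\<phi> x)\<^sup>2 + (norm (grad \<phi> x))\<^sup>2)"
  have "continuous_on UNIV f" unfolding f_def
    using Cc_inf_continuous[OF assms(1)] Cc_inf_grad_continuous[OF assms(1)]
    by (intro continuous_intros) auto
  then have "compact (f ` K)" using K(1) by (meson compact_continuous_image continuous_on_subset subset_UNIV)
  then obtain B where B: "\<forall>y\<in>f ` K. norm y \<le> B"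
    using compact_imp_bounded bounded_iff by metis
  have "ennreal (f x) * indicator D x \<le> ennreal B * indicator K x" for x
    using B K by (cases "x \<in> K") (auto simp: f_def indicator_def simp del: ennreal_plus intro!: ennreal_leI)
  then have "(\<integral>\<^sup>+x. ennreal (f x) * indicator D x \<partial>lborel) \<le> (\<integral>\<^sup>+x. ennreal B * indicator K x \<partial>lborel)"
    by (intro nn_integral_mono)
  also have "\<dots> = ennreal B * emeasure lborel K"
    using K(1) by (simp add: compact_imp_closed borel_closed nn_integral_cmult_indicator)
  also have "\<dots> < \<infinity>"
    using emeasure_bounded_finite[OF compact_imp_bounded[OF K(1)]] by (simp add: ennreal_mult_less_top)
  finally show ?thesis
    unfolding H1sq_def MD_def using assms(2) by (simp add: nn_integral_restrict_space f_def)
qed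

lemma grad_square_le_H1sq: "(\<integral>\<^sup>+x. ennreal ((norm (snd vg x))\<^sup>2) \<partial>MD D) \<le> H1sq D vg"
  unfolding H1sq_def by (intro nn_integral_mono ennreal_leI) simp

lemma Cc_inf_in_H10: "\<phi> \<in> Cc_inf D \<Longrightarrow> (\<phi>, grad \<phi>) \<in> H10 D"
  unfolding H10_def using Cc_inf_borel_measurable Cc_inf_grad_borel_measurable
  by (auto intro!: exI[of _ "\<lambda>_. \<phi>"] simp: H1sq_def)

lemma mem_H10_iff: "vg \<in> H10 D \<longleftrightarrow> fst vg \<in> borel_measurable lborel \<and> snd vg \<in> borel_measurable lborel \<and>
     (\<exists>\<phi>. (\<forall>k. \<phi> k \<in> Cc_inf D) \<and>
        (\<lambda>k. H1sq D (\<lambda>x. \<phi> k x - fst vg x, \<lambda>x. grad (\<phi> k) x - snd vg x)) \<longlonglongrightarrow> 0)"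
  by (cases vg) (simp add: H10_def)

lemma H10_grad_square_finite:
  assumes "vg \<in> H10 D" "open D"
  shows "(\<integral>\<^sup>+x. ennreal ((norm (snd vg x))\<^sup>2) \<partial>MD D) < \<infinity>"
proof -
  from assms(1) obtain \<theta> where m: "snd vg \<in> borel_measurable lborel"
    and th: "\<forall>k. \<theta> k \<in> Cc_inf D"
    and lim: "(\<lambda>k. H1sq D (\<lambda>x. \<theta> k x - fst vg x, \<lambda>x. grad (\<theta> k) x - snd vg x)) \<longlonglongrightarrow> 0"
    unfolding mem_H10_iff by blast
  from order_tendstoD(2)[OF lim, of 1] obtain k where
    k: "H1sq D (\<lambda>x. \<theta> k x - fst vg x, \<lambda>x. grad (\<theta> k) x - snd vg x) < 1"
    by (auto simp: eventually_sequentially)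
  let ?g = "grad (\<theta> k)"
  have [measurable]: "?g \<in> borel_measurable lborel" using Cc_inf_grad_borel_measurable th by blast
  have "(\<integral>\<^sup>+x. ennreal ((norm (snd vg x))\<^sup>2) \<partial>MD D) \<le>
      (\<integral>\<^sup>+x. 2 * ennreal ((norm (?g x - snd vg x))\<^sup>2) + 2 * ennreal ((norm (?g x))\<^sup>2) \<partial>MD D)"
  proof (intro nn_integral_mono)
    fix x
    have "(norm (snd vg x))\<^sup>2 \<le> 2 * (norm (?g x - snd vg x))\<^sup>2 + 2 * (norm (?g x))\<^sup>2"
      using power2_norm_add_le[of "snd vg x - ?g x" "?g x"] by (simp add: norm_minus_commute)
    then have "ennreal ((norm (snd vg x))\<^sup>2) \<le> ennreal (2 * (norm (?g x - snd vg x))\<^sup>2 + 2 * (norm (?g x))\<^sup>2)"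
      by (rule ennreal_leI)
    then show "ennreal ((norm (snd vg x))\<^sup>2) \<le> 2 * ennreal ((norm (?g x - snd vg x))\<^sup>2) + 2 * ennreal ((norm (?g x))\<^sup>2)"
      by (simp add: ennreal_plus ennreal_mult)
  qed
  also have "\<dots> = 2 * (\<integral>\<^sup>+x. ennreal ((norm (?g x - snd vg x))\<^sup>2) \<partial>MD D) + 2 * (\<integral>\<^sup>+x. ennreal ((norm (?g x))\<^sup>2) \<partial>MD D)"
  proof -
    note m[measurable]
    have "(\<lambda>x. ennreal ((norm (?g x - snd vg x))\<^sup>2)) \<in> borel_measurable (MD D)"
      "(\<lambda>x. ennreal ((norm (?g x))\<^sup>2)) \<in> borel_measurable (MD D)"
      by (rule borel_measurable_MD, measurable)+
    then show ?thesis by (subst nn_integral_add) (auto simp: nn_integral_cmult)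
  qed
  also have "\<dots> < \<infinity>"
  proof -
    have "(\<integral>\<^sup>+x. ennreal ((norm (?g x - snd vg x))\<^sup>2) \<partial>MD D) < 1"
      using grad_square_le_H1sq[of D "(\<lambda>x. \<theta> k x - fst vg x, \<lambda>x. grad (\<theta> k) x - snd vg x)"] k by simp
    moreover have "(\<integral>\<^sup>+x. ennreal ((norm (?g x))\<^sup>2) \<partial>MD D) < \<infinity>"
      using grad_square_le_H1sq[of D "(\<theta> k, ?g)"] H1sq_Cc_inf_finite[OF spec[OF th] assms(2), of k]
      by (simp add: le_less_trans)
    ultimately show ?thesis by (simp add: ennreal_mult_less_top less_trans[of _ 1])
  qed
  finally show ?thesis .
qed

section \<open>Tensor product fields\<close>

lemma power2_sum_scaleR_le:
  fixes g :: "nat \<Rightarrow> 'a::real_normed_vector"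
  shows "(\<Sum>i<m. a i * b i)\<^sup>2 + (norm (\<Sum>i<m. b i *\<^sub>R g i))\<^sup>2 \<le>
     (\<Sum>i<m. real m * (b i)\<^sup>2 * ((a i)\<^sup>2 + (norm (g i))\<^sup>2))"
proof -
  have "(\<Sum>i<m. a i * b i)\<^sup>2 \<le> real m * (\<Sum>i<m. (a i * b i)\<^sup>2)"
    using power2_norm_sum_le[of "\<lambda>i. a i * b i" "{..<m}"] by simp
  moreover have "(norm (\<Sum>i<m. b i *\<^sub>R g i))\<^sup>2 \<le> real m * (\<Sum>i<m. (norm (b i *\<^sub>R g i))\<^sup>2)"
    using power2_norm_sum_le[of "\<lambda>i. b i *\<^sub>R g i" "{..<m}"] by simp
  moreover have "real m * (\<Sum>i<m. (a i * b i)\<^sup>2) + real m * (\<Sum>i<m. (norm (b i *\<^sub>R g i))\<^sup>2) =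
      (\<Sum>i<m. real m * (b i)\<^sup>2 * ((a i)\<^sup>2 + (norm (g i))\<^sup>2))"
    by (simp add: sum_distrib_left sum.distrib[symmetric] power_mult_distrib algebra_simps)
  ultimately show ?thesis by linarith
qed

lemma tens_borel_measurable:
  assumes "\<forall>i<m. fst (\<phi> i) \<in> borel_measurable lborel" "\<forall>i<m. snd (\<phi> i) \<in> borel_measurable lborel"
    "\<forall>i<m. \<psi> i \<in> borel_measurable M"
  shows "(\<lambda>(x,\<omega>). fst (tens m \<phi> \<psi>) x \<omega>) \<in> borel_measurable (lborel \<Otimes>\<^sub>M M)"
    and "(\<lambda>(x,\<omega>). snd (tens m \<phi> \<psi>) x \<omega>) \<in> borel_measurable (lborel \<Otimes>\<^sub>M M)"
  using assms unfolding tens_def case_prod_beta'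
  by (auto intro!: borel_measurable_sum borel_measurable_times borel_measurable_scaleR
      measurable_compose[OF measurable_fst] measurable_compose[OF measurable_snd])

definition truncate :: "('w \<Rightarrow> real) \<Rightarrow> real \<Rightarrow> ('n::finite, 'w) field \<Rightarrow> ('n, 'w) field" where
  "truncate \<gamma> \<tau> U = (\<lambda>x \<omega>. indicator {\<omega>. \<gamma> \<omega> \<le> \<tau>} \<omega> * fst U x \<omega>,
                      \<lambda>x \<omega>. indicator {\<omega>. \<gamma> \<omega> \<le> \<tau>} \<omega> *\<^sub>R snd U x \<omega>)"

lemma truncate_in_tensor_trunc_space:
  assumes "v \<in> tensor V W"
  shows "truncate \<gamma> \<tau> v \<in> tensor V (trunc_space \<gamma> \<tau> W)"
proof -
  from assms obtain m \<phi> \<psi> where v: "v = tens m \<phi> \<psi>" "\<forall>i<m. \<phi> i \<in> V" "\<forall>i<m. \<psi> i \<in> W"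
    unfolding tensor_def by blast
  have "truncate \<gamma> \<tau> v = tens m \<phi> (\<lambda>i \<omega>. indicator {\<omega>. \<gamma> \<omega> \<le> \<tau>} \<omega> * \<psi> i \<omega>)"
    unfolding v by (simp add: truncate_def tens_def sum_distrib_left scaleR_sum_right algebra_simps)
  then show ?thesis unfolding tensor_def trunc_space_def using v by blast
qed

lemma Xspace_grad_measurable: "U \<in> Xspace D G \<Longrightarrow> (\<lambda>(x,\<omega>). snd U x \<omega>) \<in> borel_measurable (lborel \<Otimes>\<^sub>M G)"
  by (simp add: Xspace_def)

lemma trunc_space_subset_L2:
  assumes "\<gamma> \<in> borel_measurable G" "W \<subseteq> L2 G"
  shows "trunc_space \<gamma> \<tau> W \<subseteq> L2 G"
proof
  fix c' assume "c' \<in> trunc_space \<gamma> \<tau> W"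
  then obtain c where c: "c \<in> L2 G" and c': "c' = (\<lambda>\<omega>. indicator {\<omega>. \<gamma> \<omega> \<le> \<tau>} \<omega> * c \<omega>)"
    using assms(2) unfolding trunc_space_def by blast
  note assms(1)[measurable]
  have [measurable]: "c \<in> borel_measurable G" using c by (simp add: L2_def)
  have "(\<integral>\<^sup>+\<omega>. ennreal ((c' \<omega>)\<^sup>2) \<partial>G) \<le> (\<integral>\<^sup>+\<omega>. ennreal ((c \<omega>)\<^sup>2) \<partial>G)"
    unfolding c' by (intro nn_integral_mono ennreal_leI) (simp add: indicator_def)
  then show "c' \<in> L2 G" using c unfolding L2_def c' by (auto simp: le_less_trans)
qed

lemma Xfullsq_tens_diff_le:
  assumes "\<forall>i<m. fst (\<phi> i) \<in> borel_measurable lborel \<and> snd (\<phi> i) \<in> borel_measurable lborel"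
    and "\<forall>i<m. fst (\<theta> i) \<in> borel_measurable lborel \<and> snd (\<theta> i) \<in> borel_measurable lborel"
    and mps: "\<forall>i<m. \<psi> i \<in> borel_measurable G"
  shows "Xfullsq D G (pdiff (tens m \<phi> \<psi>) (tens m \<theta> \<psi>)) \<le>
    (\<Sum>i<m. ennreal (real m) * (\<integral>\<^sup>+\<omega>. ennreal ((\<psi> i \<omega>)\<^sup>2) \<partial>G) *
       H1sq D (\<lambda>x. fst (\<theta> i) x - fst (\<phi> i) x, \<lambda>x. snd (\<theta> i) x - snd (\<phi> i) x))"
proof -
  define h where "h i x = (fst (\<theta> i) x - fst (\<phi> i) x)\<^sup>2 + (norm (snd (\<theta> i) x - snd (\<phi> i) x))\<^sup>2" for i x
  have h_commute: "h i x = (fst (\<phi> i) x - fst (\<theta> i) x)\<^sup>2 + (norm (snd (\<phi> i) x - snd (\<theta> i) x))\<^sup>2" for i x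
    by (simp add: h_def power2_commute norm_minus_commute)
  have mh: "(\<lambda>x. ennreal (h i x)) \<in> borel_measurable (MD D)" if "i < m" for i
  proof -
    have [measurable]: "fst (\<phi> i) \<in> borel_measurable lborel" "snd (\<phi> i) \<in> borel_measurable lborel"
      "fst (\<theta> i) \<in> borel_measurable lborel" "snd (\<theta> i) \<in> borel_measurable lborel"
      using assms that by auto
    show ?thesis by (rule borel_measurable_MD) (unfold h_def, measurable)
  qed
  have pointwise: "ennreal ((fst (pdiff (tens m \<phi> \<psi>) (tens m \<theta> \<psi>)) x \<omega>)\<^sup>2
        + (norm (snd (pdiff (tens m \<phi> \<psi>) (tens m \<theta> \<psi>)) x \<omega>))\<^sup>2)
      \<le> (\<Sum>i<m. ennreal (real m * (\<psi> i \<omega>)\<^sup>2) * ennreal (h i x))" for x \<omega>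
  proof -
    have "fst (pdiff (tens m \<phi> \<psi>) (tens m \<theta> \<psi>)) x \<omega> = (\<Sum>i<m. (fst (\<phi> i) x - fst (\<theta> i) x) * \<psi> i \<omega>)"
      "snd (pdiff (tens m \<phi> \<psi>) (tens m \<theta> \<psi>)) x \<omega> = (\<Sum>i<m. \<psi> i \<omega> *\<^sub>R (snd (\<phi> i) x - snd (\<theta> i) x))"
      by (simp_all add: pdiff_def tens_def sum_subtractf left_diff_distrib scaleR_diff_right)
    then have "(fst (pdiff (tens m \<phi> \<psi>) (tens m \<theta> \<psi>)) x \<omega>)\<^sup>2
        + (norm (snd (pdiff (tens m \<phi> \<psi>) (tens m \<theta> \<psi>)) x \<omega>))\<^sup>2
        \<le> (\<Sum>i<m. real m * (\<psi> i \<omega>)\<^sup>2 * h i x)"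
      using power2_sum_scaleR_le[of "\<lambda>i. fst (\<phi> i) x - fst (\<theta> i) x" "\<lambda>i. \<psi> i \<omega>" m
          "\<lambda>i. snd (\<phi> i) x - snd (\<theta> i) x"]
      by (simp only: h_commute)
    then have "ennreal ((fst (pdiff (tens m \<phi> \<psi>) (tens m \<theta> \<psi>)) x \<omega>)\<^sup>2
        + (norm (snd (pdiff (tens m \<phi> \<psi>) (tens m \<theta> \<psi>)) x \<omega>))\<^sup>2)
        \<le> ennreal (\<Sum>i<m. real m * (\<psi> i \<omega>)\<^sup>2 * h i x)" by (rule ennreal_leI)
    also have "\<dots> = (\<Sum>i<m. ennreal (real m * (\<psi> i \<omega>)\<^sup>2) * ennreal (h i x))"
      by (subst sum_ennreal[symmetric]) (auto simp: h_def ennreal_mult intro!: sum.cong)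
    finally show ?thesis .
  qed
  have "Xfullsq D G (pdiff (tens m \<phi> \<psi>) (tens m \<theta> \<psi>)) \<le>
      (\<integral>\<^sup>+\<omega>. \<integral>\<^sup>+x. (\<Sum>i<m. ennreal (real m * (\<psi> i \<omega>)\<^sup>2) * ennreal (h i x)) \<partial>MD D \<partial>G)"
    unfolding Xfullsq_def by (intro nn_integral_mono pointwise)
  also have "\<dots> = (\<integral>\<^sup>+\<omega>. (\<Sum>i<m. ennreal (real m * (\<psi> i \<omega>)\<^sup>2) * (\<integral>\<^sup>+x. ennreal (h i x) \<partial>MD D)) \<partial>G)"
    using mh by (intro nn_integral_cong, subst nn_integral_sum) (auto simp: nn_integral_cmult)
  also have "\<dots> = (\<Sum>i<m. (\<integral>\<^sup>+\<omega>. ennreal (real m * (\<psi> i \<omega>)\<^sup>2) \<partial>G) * (\<integral>\<^sup>+x. ennreal (h i x) \<partial>MD D))"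
    using mps by (subst nn_integral_sum) (auto intro!: sum.cong nn_integral_multc)
  also have "\<dots> = (\<Sum>i<m. ennreal (real m) * (\<integral>\<^sup>+\<omega>. ennreal ((\<psi> i \<omega>)\<^sup>2) \<partial>G) *
       H1sq D (\<lambda>x. fst (\<theta> i) x - fst (\<phi> i) x, \<lambda>x. snd (\<theta> i) x - snd (\<phi> i) x))"
  proof (intro sum.cong refl)
    fix i assume "i \<in> {..<m}"
    then have [measurable]: "\<psi> i \<in> borel_measurable G" using mps by auto
    show "(\<integral>\<^sup>+\<omega>. ennreal (real m * (\<psi> i \<omega>)\<^sup>2) \<partial>G) * (\<integral>\<^sup>+x. ennreal (h i x) \<partial>MD D) =
        ennreal (real m) * (\<integral>\<^sup>+\<omega>. ennreal ((\<psi> i \<omega>)\<^sup>2) \<partial>G) *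
        H1sq D (\<lambda>x. fst (\<theta> i) x - fst (\<phi> i) x, \<lambda>x. snd (\<theta> i) x - snd (\<phi> i) x)"
      by (simp add: H1sq_def h_def ennreal_mult nn_integral_cmult)
  qed
  finally show ?thesis .
qed

lemma tens_in_Xspace:
  assumes \<phi>: "\<forall>i<m. \<phi> i \<in> H10 D" and \<psi>: "\<forall>i<m. \<psi> i \<in> L2 G"
  shows "tens m \<phi> \<psi> \<in> Xspace D G"
proof -
  have m\<phi>: "\<forall>i<m. fst (\<phi> i) \<in> borel_measurable lborel \<and> snd (\<phi> i) \<in> borel_measurable lborel"
    using \<phi> by (auto simp: mem_H10_iff)
  have m\<psi>: "\<forall>i<m. \<psi> i \<in> borel_measurable G" using \<psi> by (auto simp: L2_def)
  have "\<forall>i\<in>{..<m}. \<exists>\<theta>. (\<forall>k. \<theta> k \<in> Cc_inf D) \<and>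
        (\<lambda>k. H1sq D (\<lambda>x. \<theta> k x - fst (\<phi> i) x, \<lambda>x. grad (\<theta> k) x - snd (\<phi> i) x)) \<longlonglongrightarrow> 0"
    using \<phi> by (auto simp: mem_H10_iff)
  then obtain \<Theta> where \<Theta>: "\<forall>i\<in>{..<m}. (\<forall>k. \<Theta> i k \<in> Cc_inf D) \<and>
        (\<lambda>k. H1sq D (\<lambda>x. \<Theta> i k x - fst (\<phi> i) x, \<lambda>x. grad (\<Theta> i k) x - snd (\<phi> i) x)) \<longlonglongrightarrow> 0"
    by (rule bchoice[elim_format]) blast
  have "\<And>i k. i < m \<Longrightarrow> \<Theta> i k \<in> Cc_inf D" using \<Theta> by auto
  then have m\<Theta>: "\<forall>i<m. \<Theta> i k \<in> borel_measurable lborel \<and> grad (\<Theta> i k) \<in> borel_measurable lborel" for k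
    using Cc_inf_borel_measurable Cc_inf_grad_borel_measurable by blast
  define S where "S k = tens m (\<lambda>i. (\<Theta> i k, grad (\<Theta> i k))) \<psi>" for k
  have "S k \<in> tensor ((\<lambda>\<phi>. (\<phi>, grad \<phi>)) ` Cc_inf D) (L2 G)" for k
    unfolding tensor_def S_def using \<Theta> \<psi> by blast
  moreover have "(\<lambda>k. Xfullsq D G (pdiff (tens m \<phi> \<psi>) (S k))) \<longlonglongrightarrow> 0"
  proof (rule tendsto_sandwich[OF _ _ tendsto_const])
    let ?B = "\<lambda>k. \<Sum>i<m. ennreal (real m) * (\<integral>\<^sup>+\<omega>. ennreal ((\<psi> i \<omega>)\<^sup>2) \<partial>G) *
       H1sq D (\<lambda>x. \<Theta> i k x - fst (\<phi> i) x, \<lambda>x. grad (\<Theta> i k) x - snd (\<phi> i) x)"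
    show "\<forall>\<^sub>F k in sequentially. Xfullsq D G (pdiff (tens m \<phi> \<psi>) (S k)) \<le> ?B k"
      unfolding S_def
      by (intro always_eventually allI order_trans[OF Xfullsq_tens_diff_le[OF m\<phi> _ m\<psi>]])
        (use m\<Theta> in auto)
    have "?B \<longlonglongrightarrow> (\<Sum>i<m. ennreal (real m) * (\<integral>\<^sup>+\<omega>. ennreal ((\<psi> i \<omega>)\<^sup>2) \<partial>G) * 0)"
      using \<Theta> \<psi> by (intro tendsto_sum ennreal_tendsto_cmult) (auto simp: L2_def ennreal_mult_less_top)
    then show "?B \<longlonglongrightarrow> 0" by simp
  qed simp
  ultimately show ?thesis
    using tens_borel_measurable[of m \<phi> \<psi>] m\<phi> m\<psi> unfolding Xspace_def by blast
qed

lemma tensor_subset_Xspace: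
  assumes "V \<subseteq> H10 D" "W \<subseteq> L2 G"
  shows "tensor V W \<subseteq> Xspace D G"
proof
  fix w assume "w \<in> tensor V W"
  then obtain m \<phi> \<psi> where "w = tens m \<phi> \<psi>" "\<forall>i<m. \<phi> i \<in> V" "\<forall>i<m. \<psi> i \<in> W"
    unfolding tensor_def by blast
  then show "w \<in> Xspace D G" using assms by (blast intro: tens_in_Xspace)
qed

section \<open>The energy form\<close>

definition energy_density :: "(real^'n::finite \<Rightarrow> 'w \<Rightarrow> real^'n^'n) \<Rightarrow> (real^'n \<Rightarrow> 'w \<Rightarrow> real^'n) \<Rightarrow>
    (real^'n \<Rightarrow> 'w \<Rightarrow> real^'n) \<Rightarrow> (real^'n) \<times> 'w \<Rightarrow> real" where
  "energy_density C h k z = k (fst z) (snd z) \<bullet> (C (fst z) (snd z) *v h (fst z) (snd z))"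

lemma energy_density_diff_left:
  "energy_density C (\<lambda>x \<omega>. h1 x \<omega> - h2 x \<omega>) k z = energy_density C h1 k z - energy_density C h2 k z"
  by (simp add: energy_density_def matrix_vector_mult_diff_distrib inner_diff_right)

lemma energy_density_diff_right:
  "energy_density C h (\<lambda>x \<omega>. k1 x \<omega> - k2 x \<omega>) z = energy_density C h k1 z - energy_density C h k2 z"
  by (simp add: energy_density_def inner_diff_left)

lemma energy_density_sum:
  "energy_density C (\<lambda>x \<omega>. \<Sum>n\<in>I. a n *\<^sub>R h n x \<omega>) (\<lambda>x \<omega>. \<Sum>m\<in>J. d m *\<^sub>R k m x \<omega>) z =
     (\<Sum>m\<in>J. \<Sum>n\<in>I. d m * a n * energy_density C (h n) (k m) z)"
  by (subst sum.swap) (simp add: energy_density_def inner_sum_left inner_sum_right matrix_vector_mult_sum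
      matrix_vector_mult_scaleR sum_distrib_left algebra_simps)

lemma energy_density_sum_right:
  "energy_density C h (\<lambda>x \<omega>. \<Sum>m\<in>J. d m *\<^sub>R k m x \<omega>) z = (\<Sum>m\<in>J. d m * energy_density C h (k m) z)"
  by (simp add: energy_density_def inner_sum_left)

locale galerkin_setting =
  fixes D :: "(real^'n::finite) set" and G :: "'w measure"
    and C :: "real^'n \<Rightarrow> 'w \<Rightarrow> real^'n^'n" and \<gamma> :: "'w \<Rightarrow> real"
  assumes open_D: "open D" and prob_space_G: "prob_space G"
    and C_measurable: "(\<lambda>(x,\<omega>). C x \<omega>) \<in> borel_measurable (lborel \<Otimes>\<^sub>M G)"
    and C_spd: "\<forall>x\<in>D. \<forall>\<omega>. transpose (C x \<omega>) = C x \<omega> \<and> (\<forall>h. h \<noteq> 0 \<longrightarrow> h \<bullet> (C x \<omega> *v h) > 0)"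
    and \<gamma>_measurable: "\<gamma> \<in> borel_measurable G"
    and C_le_\<gamma>: "AE \<omega> in G. AE x in MD D. \<forall>h. h \<bullet> (C x \<omega> *v h) \<le> \<gamma> \<omega> * (norm h)\<^sup>2"
begin

lemma space_MD[simp]: "space (MD D) = D"
  by (simp add: MD_def space_restrict_space)

sublocale G: prob_space G by (rule prob_space_G)

sublocale MD_G: pair_sigma_finite "MD D" G
proof (intro pair_sigma_finite.intro G.sigma_finite_measure_axioms)
  show "sigma_finite_measure (MD D)"
    unfolding MD_def using open_D
    by (intro sigma_finite_measure_restrict_space) (auto intro: lborel.sigma_finite_measure_axioms)
qed

abbreviation "MDG \<equiv> MD D \<Otimes>\<^sub>M G"

lemma fst_in_D: "z \<in> space MDG \<Longrightarrow> fst z \<in> D"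
  by (auto simp: space_pair_measure)

lemma measurable_MDG_of_lborel:
  assumes "(\<lambda>(x,\<omega>). f x \<omega>) \<in> borel_measurable (lborel \<Otimes>\<^sub>M G)"
  shows "(\<lambda>z. f (fst z) (snd z)) \<in> borel_measurable MDG"
proof -
  have "(\<lambda>x. x) \<in> MD D \<rightarrow>\<^sub>M lborel"
    unfolding MD_def by (rule measurable_restrict_space1) simp
  then have "(\<lambda>z. (fst z, snd z)) \<in> MDG \<rightarrow>\<^sub>M lborel \<Otimes>\<^sub>M G"
    by (intro measurable_Pair) (auto intro: measurable_compose[OF measurable_fst])
  from measurable_comp[OF this assms] show ?thesis by (simp add: comp_def case_prod_beta)
qed

lemma nn_integral_iterated:
  fixes f :: "_ \<Rightarrow> _ \<Rightarrow> ennreal"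
  assumes "(\<lambda>(x,\<omega>). f x \<omega>) \<in> borel_measurable (lborel \<Otimes>\<^sub>M G)"
  shows "(\<integral>\<^sup>+\<omega>. \<integral>\<^sup>+x. f x \<omega> \<partial>MD D \<partial>G) = (\<integral>\<^sup>+z. f (fst z) (snd z) \<partial>MDG)"
  using MD_G.nn_integral_snd[of "\<lambda>z. f (fst z) (snd z)"] measurable_MDG_of_lborel[OF assms] by simp

lemma energy_integrand_measurable:
  assumes "(\<lambda>(x,\<omega>). h x \<omega>) \<in> borel_measurable (lborel \<Otimes>\<^sub>M G)"
    "(\<lambda>(x,\<omega>). k x \<omega>) \<in> borel_measurable (lborel \<Otimes>\<^sub>M G)"
  shows "(\<lambda>(x,\<omega>). k x \<omega> \<bullet> (C x \<omega> *v h x \<omega>)) \<in> borel_measurable (lborel \<Otimes>\<^sub>M G)"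
proof -
  have "(\<lambda>z. k (fst z) (snd z) \<bullet> (C (fst z) (snd z) *v h (fst z) (snd z))) \<in> borel_measurable (lborel \<Otimes>\<^sub>M G)"
    using assms C_measurable by (intro borel_measurable_inner borel_measurable_matrix_vector_mult)
      (auto simp: case_prod_beta)
  then show ?thesis by (simp add: case_prod_beta)
qed

lemma energy_density_measurable:
  assumes "(\<lambda>(x,\<omega>). h x \<omega>) \<in> borel_measurable (lborel \<Otimes>\<^sub>M G)"
    "(\<lambda>(x,\<omega>). k x \<omega>) \<in> borel_measurable (lborel \<Otimes>\<^sub>M G)"
  shows "energy_density C h k \<in> borel_measurable MDG"
  using measurable_MDG_of_lborel[OF energy_integrand_measurable[OF assms]]
  by (simp add: energy_density_def[abs_def])

lemma a_integrable_iff: "a_integrable D G C U W \<longleftrightarrow> integrable MDG (energy_density C (snd U) (snd W))"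
  unfolding a_integrable_def energy_density_def by (simp add: case_prod_beta')

lemma a_form_eq_integral:
  "a_integrable D G C U W \<Longrightarrow> a_form D G C U W = (\<integral>z. energy_density C (snd U) (snd W) z \<partial>MDG)"
  unfolding a_integrable_def a_form_def
  using MD_G.integral_snd[of "\<lambda>x \<omega>. snd W x \<omega> \<bullet> (C x \<omega> *v snd U x \<omega>)"]
  by (simp add: energy_density_def case_prod_beta')

lemma normCsq_eq_nn_integral:
  assumes "(\<lambda>(x,\<omega>). snd U x \<omega>) \<in> borel_measurable (lborel \<Otimes>\<^sub>M G)"
  shows "normCsq D G C U = (\<integral>\<^sup>+z. ennreal (energy_density C (snd U) (snd U) z) \<partial>MDG)"
  unfolding normCsq_def energy_density_def
  by (rule nn_integral_iterated[of "\<lambda>x \<omega>. ennreal (snd U x \<omega> \<bullet> (C x \<omega> *v snd U x \<omega>))"])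
     (use energy_integrand_measurable[OF assms assms] in measurable)

lemma normXsq_eq_nn_integral:
  assumes "(\<lambda>(x,\<omega>). snd U x \<omega>) \<in> borel_measurable (lborel \<Otimes>\<^sub>M G)"
  shows "normXsq D G U = (\<integral>\<^sup>+z. ennreal ((norm (snd U (fst z) (snd z)))\<^sup>2) \<partial>MDG)"
  unfolding normXsq_def
  by (rule nn_integral_iterated[of "\<lambda>x \<omega>. ennreal ((norm (snd U x \<omega>))\<^sup>2)"]) (use assms in measurable)

lemma energy_density_nonneg: "z \<in> space MDG \<Longrightarrow> 0 \<le> energy_density C h h z"
  using C_spd fst_in_D[of z] unfolding energy_density_def
  by (metis order.refl inner_zero_left less_eq_real_def)

lemma energy_density_eq_0D: "z \<in> space MDG \<Longrightarrow> energy_density C h h z = 0 \<Longrightarrow> h (fst z) (snd z) = 0"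
  using C_spd fst_in_D[of z] unfolding energy_density_def by (metis less_irrefl)

lemma energy_density_commute: "z \<in> space MDG \<Longrightarrow> energy_density C h k z = energy_density C k h z"
  using C_spd fst_in_D[of z] unfolding energy_density_def by (metis inner_matrix_vector_symmetric)

lemma energy_density_combination:
  assumes "z \<in> space MDG"
  shows "energy_density C (\<lambda>x \<omega>. a *\<^sub>R h x \<omega> + b *\<^sub>R k x \<omega>) (\<lambda>x \<omega>. c *\<^sub>R h x \<omega> + f *\<^sub>R k x \<omega>) z =
     a*c*energy_density C h h z + (a*f + b*c)*energy_density C h k z + b*f*energy_density C k k z"
  using C_spd fst_in_D[OF assms] unfolding energy_density_def by (simp add: symmetric_quadratic_form_combination)

lemma energy_abs_le:
  assumes "x \<in> D"
  shows "\<bar>k \<bullet> (C x \<omega> *v h)\<bar> \<le> (h \<bullet> (C x \<omega> *v h) + k \<bullet> (C x \<omega> *v k)) / 2"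
proof -
  have s: "transpose (C x \<omega>) = C x \<omega>" and p: "\<And>v. 0 \<le> v \<bullet> (C x \<omega> *v v)"
    using C_spd assms by (auto, metis inner_zero_left matrix_vector_mult_0_right order.refl less_eq_real_def)
  have "0 \<le> (1 *\<^sub>R h + 1 *\<^sub>R k) \<bullet> (C x \<omega> *v (1 *\<^sub>R h + 1 *\<^sub>R k))"
    "0 \<le> (1 *\<^sub>R h + (-1) *\<^sub>R k) \<bullet> (C x \<omega> *v (1 *\<^sub>R h + (-1) *\<^sub>R k))" by (rule p)+
  then show ?thesis unfolding symmetric_quadratic_form_combination[OF s] by (simp add: abs_le_iff)
qed

end

section \<open>Galerkin approximation on truncated tensor spaces\<close>

context galerkin_setting
begin

lemma tensor_trunc_space_subset_Xspace:
  "V \<subseteq> H10 D \<Longrightarrow> W \<subseteq> L2 G \<Longrightarrow> tensor V (trunc_space \<gamma> \<tau> W) \<subseteq> Xspace D G"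
  using tensor_subset_Xspace trunc_space_subset_L2[OF \<gamma>_measurable] by blast

lemma nn_integral_energy_eq_integral:
  "integrable MDG (energy_density C h h) \<Longrightarrow>
    (\<integral>\<^sup>+z. ennreal (energy_density C h h z) \<partial>MDG) = ennreal (\<integral>z. energy_density C h h z \<partial>MDG)"
  by (rule nn_integral_eq_integral) (auto intro: AE_I2 energy_density_nonneg)

lemma energy_le_of_orthogonal:
  assumes me: "(\<lambda>(x,\<omega>). e x \<omega>) \<in> borel_measurable (lborel \<Otimes>\<^sub>M G)"
    and md: "(\<lambda>(x,\<omega>). d x \<omega>) \<in> borel_measurable (lborel \<Otimes>\<^sub>M G)"
    and ie: "integrable MDG (energy_density C e e)" and ied: "integrable MDG (energy_density C e d)"
    and orth: "(\<integral>z. energy_density C e d z \<partial>MDG) = 0"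
  shows "(\<integral>\<^sup>+z. ennreal (energy_density C e e z) \<partial>MDG) \<le>
     (\<integral>\<^sup>+z. ennreal (energy_density C (\<lambda>x \<omega>. e x \<omega> + d x \<omega>) (\<lambda>x \<omega>. e x \<omega> + d x \<omega>) z) \<partial>MDG)"
    (is "_ \<le> (\<integral>\<^sup>+z. ennreal (energy_density C ?v ?v z) \<partial>MDG)")
proof -
  have expand: "energy_density C ?v ?v z = energy_density C e e z + 2 * energy_density C e d z + energy_density C d d z"
    if "z \<in> space MDG" for z
    using energy_density_combination[OF that, of 1 e 1 d 1 1] by simp
  have m: "energy_density C h h \<in> borel_measurable MDG"
    if "(\<lambda>(x,\<omega>). h x \<omega>) \<in> borel_measurable (lborel \<Otimes>\<^sub>M G)" for h
    by (rule energy_density_measurable[OF that that])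
  have mv: "(\<lambda>(x,\<omega>). ?v x \<omega>) \<in> borel_measurable (lborel \<Otimes>\<^sub>M G)"
    using me md by (simp add: case_prod_beta')
  show ?thesis
  proof (cases "integrable MDG (energy_density C d d)")
    case False
    \<comment> \<open>then ?v has infinite energy, since d = ?v - e and e has finite energy\<close>
    have bound: "energy_density C d d z \<le> 2 * energy_density C ?v ?v z + 2 * energy_density C e e z"
      if z: "z \<in> space MDG" for z
      using energy_density_nonneg[OF z, of "\<lambda>x \<omega>. 2 *\<^sub>R e x \<omega> + 1 *\<^sub>R d x \<omega>"]
        energy_density_combination[OF z, of 2 e 1 d 2 1] expand[OF z] by simp
    have "integrable MDG (energy_density C d d)" if "integrable MDG (energy_density C ?v ?v)"
    proof (intro Bochner_Integration.integrable_bound[OF _ m[OF md]] AE_I2)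
      show "integrable MDG (\<lambda>z. 2 * energy_density C ?v ?v z + 2 * energy_density C e e z)"
        using that ie by simp
      show "norm (energy_density C d d z) \<le> norm (2 * energy_density C ?v ?v z + 2 * energy_density C e e z)"
        if "z \<in> space MDG" for z
        using bound[OF that] energy_density_nonneg[OF that, of d] by simp
    qed
    then have "\<not> integrable MDG (energy_density C ?v ?v)" using False by blast
    then have "(\<integral>\<^sup>+z. ennreal (energy_density C ?v ?v z) \<partial>MDG) = \<infinity>"
      using integrableI_nonneg[OF m[OF mv] AE_I2[OF energy_density_nonneg]] by (auto simp: less_top[symmetric])
    then show ?thesis by simp
  next
    case True
    have iv: "integrable MDG (energy_density C ?v ?v)"
      using ie ied True by (subst Bochner_Integration.integrable_cong[OF refl expand]) auto
    have "(\<integral>z. energy_density C ?v ?v z \<partial>MDG) =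
        (\<integral>z. energy_density C e e z \<partial>MDG) + 2 * (\<integral>z. energy_density C e d z \<partial>MDG) + (\<integral>z. energy_density C d d z \<partial>MDG)"
      using ie ied True by (subst Bochner_Integration.integral_cong[OF refl expand]) auto
    moreover have "0 \<le> (\<integral>z. energy_density C d d z \<partial>MDG)"
      by (intro integral_nonneg_AE AE_I2 energy_density_nonneg)
    ultimately have "(\<integral>z. energy_density C e e z \<partial>MDG) \<le> (\<integral>z. energy_density C ?v ?v z \<partial>MDG)"
      using orth by simp
    then show ?thesis
      by (simp add: nn_integral_energy_eq_integral[OF ie] nn_integral_energy_eq_integral[OF iv] ennreal_leI)
  qed
qed

lemma truncated_energy_bound:
  assumes mu: "(\<lambda>(x,\<omega>). snd u x \<omega>) \<in> borel_measurable (lborel \<Otimes>\<^sub>M G)"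
    and mv: "(\<lambda>(x,\<omega>). snd v x \<omega>) \<in> borel_measurable (lborel \<Otimes>\<^sub>M G)"
    and tau: "0 \<le> \<tau>"
  shows "normCsq D G C (pdiff u (truncate \<gamma> \<tau> v))
    \<le> ennreal \<tau> * normXsq D G (pdiff u v) + normCsq D G C (cut_above \<gamma> \<tau> u)"
proof -
  define e where "e = snd (pdiff u (truncate \<gamma> \<tau> v))"
  define d where "d = snd (pdiff u v)"
  define c where "c = snd (cut_above \<gamma> \<tau> u)"
  have e: "e x \<omega> = (if \<gamma> \<omega> \<le> \<tau> then d x \<omega> else snd u x \<omega>)"
    and c: "c x \<omega> = (if \<gamma> \<omega> \<le> \<tau> then 0 else snd u x \<omega>)" for x \<omega>
    by (simp_all add: e_def d_def c_def pdiff_def truncate_def cut_above_def)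
  note \<gamma>_measurable[measurable]
  have md: "(\<lambda>(x,\<omega>). d x \<omega>) \<in> borel_measurable (lborel \<Otimes>\<^sub>M G)"
    using mu mv by (simp add: d_def pdiff_def case_prod_beta')
  have mc: "(\<lambda>(x,\<omega>). c x \<omega>) \<in> borel_measurable (lborel \<Otimes>\<^sub>M G)"
    using mu by (simp add: c_def cut_above_def case_prod_beta')
  let ?f = "\<lambda>x \<omega>. ennreal \<tau> * ennreal ((norm (d x \<omega>))\<^sup>2) + ennreal (c x \<omega> \<bullet> (C x \<omega> *v c x \<omega>))"
  have "AE \<omega> in G. AE x in MD D. ennreal (e x \<omega> \<bullet> (C x \<omega> *v e x \<omega>)) \<le> ?f x \<omega>"
    using C_le_\<gamma>
  proof eventually_elim
    case (elim \<omega>)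
    then show ?case
    proof eventually_elim
      case (elim x)
      note le = elim
      show ?case
      proof (cases "\<gamma> \<omega> \<le> \<tau>")
        case True
        have "d x \<omega> \<bullet> (C x \<omega> *v d x \<omega>) \<le> \<tau> * (norm (d x \<omega>))\<^sup>2"
          using le[rule_format, of "d x \<omega>"] mult_right_mono[OF True zero_le_power2, of "norm (d x \<omega>)"]
          by linarith
        then show ?thesis
          using True tau by (simp add: e c ennreal_leI ennreal_mult[symmetric] add_increasing2)
      qed (simp add: e c)
    qed
  qed
  then have "normCsq D G C (pdiff u (truncate \<gamma> \<tau> v)) \<le> (\<integral>\<^sup>+\<omega>. \<integral>\<^sup>+x. ?f x \<omega> \<partial>MD D \<partial>G)"
    unfolding normCsq_def e_def[symmetric]
    by (rule nn_integral_mono_AE[OF eventually_mono]) (rule nn_integral_mono_AE)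
  also have "\<dots> = (\<integral>\<^sup>+z. ?f (fst z) (snd z) \<partial>MDG)"
    by (rule nn_integral_iterated) (use md energy_integrand_measurable[OF mc mc] in measurable)
  also have "\<dots> = ennreal \<tau> * (\<integral>\<^sup>+z. ennreal ((norm (d (fst z) (snd z)))\<^sup>2) \<partial>MDG)
      + (\<integral>\<^sup>+z. ennreal (c (fst z) (snd z) \<bullet> (C (fst z) (snd z) *v c (fst z) (snd z))) \<partial>MDG)"
    using measurable_MDG_of_lborel[OF md] measurable_MDG_of_lborel[OF energy_integrand_measurable[OF mc mc]]
    by (subst nn_integral_add) (auto simp: nn_integral_cmult)
  also have "(\<integral>\<^sup>+z. ennreal ((norm (d (fst z) (snd z)))\<^sup>2) \<partial>MDG) = normXsq D G (pdiff u v)"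
    unfolding normXsq_def d_def[symmetric] by (rule nn_integral_iterated[symmetric]) (use md in measurable)
  also have "(\<integral>\<^sup>+z. ennreal (c (fst z) (snd z) \<bullet> (C (fst z) (snd z) *v c (fst z) (snd z))) \<partial>MDG)
      = normCsq D G C (cut_above \<gamma> \<tau> u)"
    unfolding normCsq_def c_def[symmetric]
    by (rule nn_integral_iterated[symmetric]) (use energy_integrand_measurable[OF mc mc] in measurable)
  finally show ?thesis .
qed

lemma galerkin_energy_le:
  assumes S: "S \<subseteq> Xspace D G"
    and u: "galerkin_sol D G C f (Xspace D G) u"
    and uN: "galerkin_sol D G C f S uN" and w: "w \<in> S"
  shows "normCsq D G C (pdiff u uN) \<le> normCsq D G C (pdiff u w)"
proof -
  have uX: "u \<in> Xspace D G" and au: "\<forall>W\<in>Xspace D G. a_integrable D G C u W \<and> a_form D G C u W = F_form G f W"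
    using u by (auto simp: galerkin_sol_def)
  have uNS: "uN \<in> S" and auN: "\<forall>W\<in>S. a_integrable D G C uN W \<and> a_form D G C uN W = F_form G f W"
    using uN by (auto simp: galerkin_sol_def)
  have uNX: "uN \<in> Xspace D G" and wX: "w \<in> Xspace D G" using S uNS w by auto
  define su sN sw where "su = snd u" and "sN = snd uN" and "sw = snd w"
  have mu: "(\<lambda>(x,\<omega>). su x \<omega>) \<in> borel_measurable (lborel \<Otimes>\<^sub>M G)"
    and mN: "(\<lambda>(x,\<omega>). sN x \<omega>) \<in> borel_measurable (lborel \<Otimes>\<^sub>M G)"
    and mw: "(\<lambda>(x,\<omega>). sw x \<omega>) \<in> borel_measurable (lborel \<Otimes>\<^sub>M G)"
    using Xspace_grad_measurable[OF uX] Xspace_grad_measurable[OF uNX] Xspace_grad_measurable[OF wX]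
    by (simp_all add: su_def sN_def sw_def)
  define e where "e = (\<lambda>x \<omega>. su x \<omega> - sN x \<omega>)"
  define d where "d = (\<lambda>x \<omega>. sN x \<omega> - sw x \<omega>)"
  have me: "(\<lambda>(x,\<omega>). e x \<omega>) \<in> borel_measurable (lborel \<Otimes>\<^sub>M G)"
    and md: "(\<lambda>(x,\<omega>). d x \<omega>) \<in> borel_measurable (lborel \<Otimes>\<^sub>M G)"
    using mu mN mw by (simp_all add: e_def d_def case_prod_beta')
  have i_uu: "integrable MDG (energy_density C su su)"
    and i_uN: "integrable MDG (energy_density C su sN)"
    and i_uw: "integrable MDG (energy_density C su sw)"
    using au uX uNX wX by (auto simp: a_integrable_iff su_def sN_def sw_def)
  have i_NN: "integrable MDG (energy_density C sN sN)"
    and i_Nw: "integrable MDG (energy_density C sN sw)"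
    using auN uNS w by (auto simp: a_integrable_iff sN_def sw_def)
  have i_Nu: "integrable MDG (energy_density C sN su)"
    using i_uN by (subst Bochner_Integration.integrable_cong[OF refl energy_density_commute]) auto
  have ee: "energy_density C e e z = (energy_density C su su z - energy_density C su sN z)
      - (energy_density C sN su z - energy_density C sN sN z)" for z
    unfolding e_def energy_density_diff_left energy_density_diff_right by simp
  have ed: "energy_density C e d z = (energy_density C su sN z - energy_density C sN sN z)
      - (energy_density C su sw z - energy_density C sN sw z)" for z
    unfolding e_def d_def energy_density_diff_left energy_density_diff_right by simp
  have ie: "integrable MDG (energy_density C e e)" unfolding ee[abs_def] using i_uu i_uN i_Nu i_NN by simp
  have ied: "integrable MDG (energy_density C e d)" unfolding ed[abs_def] using i_uN i_NN i_uw i_Nw by simp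
  have "(\<integral>z. energy_density C e d z \<partial>MDG)
      = (a_form D G C u uN - a_form D G C uN uN) - (a_form D G C u w - a_form D G C uN w)"
    unfolding ed[abs_def] using i_uN i_NN i_uw i_Nw
    by (simp add: a_form_eq_integral a_integrable_iff su_def sN_def sw_def)
  also have "\<dots> = 0" using au auN uNX wX uNS w by simp
  finally have orth: "(\<integral>z. energy_density C e d z \<partial>MDG) = 0" .
  have "normCsq D G C (pdiff u uN) = (\<integral>\<^sup>+z. ennreal (energy_density C e e z) \<partial>MDG)"
    by (subst normCsq_eq_nn_integral) (use me in \<open>simp_all add: e_def su_def sN_def pdiff_def\<close>)
  also have "\<dots> \<le> (\<integral>\<^sup>+z. ennreal (energy_density C (\<lambda>x \<omega>. e x \<omega> + d x \<omega>) (\<lambda>x \<omega>. e x \<omega> + d x \<omega>) z) \<partial>MDG)"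
    by (rule energy_le_of_orthogonal[OF me md ie ied orth])
  also have "(\<lambda>x \<omega>. e x \<omega> + d x \<omega>) = snd (pdiff u w)"
    by (simp add: e_def d_def pdiff_def su_def sw_def)
  also have "(\<integral>\<^sup>+z. ennreal (energy_density C (snd (pdiff u w)) (snd (pdiff u w)) z) \<partial>MDG) = normCsq D G C (pdiff u w)"
    by (subst normCsq_eq_nn_integral) (use mu mw in \<open>simp_all add: su_def sw_def pdiff_def case_prod_beta'\<close>)
  finally show ?thesis .
qed

lemma galerkin_error_bound:
  assumes V: "V \<subseteq> H10 D" and W: "W \<subseteq> L2 G"
    and u: "galerkin_sol D G C f (Xspace D G) u" and tau: "\<tau> > 0"
    and uN: "galerkin_sol D G C f (tensor V (trunc_space \<gamma> \<tau> W)) uN"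
  shows "normCsq D G C (pdiff u uN) \<le> ennreal \<tau> * (INF v\<in>tensor V W. normXsq D G (pdiff u v))
      + normCsq D G C (cut_above \<gamma> \<tau> u)"
proof (rule ennreal_le_mult_INF_add[OF _ tau], rule ballI)
  fix v assume v: "v \<in> tensor V W"
  have uX: "u \<in> Xspace D G" using u by (simp add: galerkin_sol_def)
  have "normCsq D G C (pdiff u uN) \<le> normCsq D G C (pdiff u (truncate \<gamma> \<tau> v))"
    using tensor_trunc_space_subset_Xspace[OF V W] u uN truncate_in_tensor_trunc_space[OF v]
    by (rule galerkin_energy_le)
  also have "\<dots> \<le> ennreal \<tau> * normXsq D G (pdiff u v) + normCsq D G C (cut_above \<gamma> \<tau> u)"
    using tensor_subset_Xspace[OF V W] v tau
    by (intro truncated_energy_bound Xspace_grad_measurable[OF uX] Xspace_grad_measurable) auto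
  finally show "normCsq D G C (pdiff u uN) \<le> ennreal \<tau> * normXsq D G (pdiff u v) + normCsq D G C (cut_above \<gamma> \<tau> u)" .
qed

end

section \<open>Solvability of the discrete problems\<close>

lemma sum_delta_mult: "finite A \<Longrightarrow> k \<in> A \<Longrightarrow> (\<Sum>i\<in>A. (if i = k then 1 else 0) * f i) = (f k :: real)"
  by (subst sum.cong[OF refl, of _ _ "\<lambda>i. if i = k then f i else 0"]) auto

lemma sum_delta_scaleR:
  "finite A \<Longrightarrow> k \<in> A \<Longrightarrow> (\<Sum>i\<in>A. (if i = k then 1 else 0) *\<^sub>R f i) = (f k :: 'a::real_vector)"
  by (subst sum.cong[OF refl, of _ _ "\<lambda>i. if i = k then f i else 0"]) auto

lemma tensor_trunc_space_grad_span:
  fixes b :: "nat \<Rightarrow> (real^'n::finite \<Rightarrow> real) \<times> (real^'n \<Rightarrow> real^'n)" and cc :: "nat \<Rightarrow> 'w \<Rightarrow> real"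
  assumes Vd: "V = {(\<lambda>x. \<Sum>i<K. c i * fst (b i) x, \<lambda>x. \<Sum>i<K. c i *\<^sub>R snd (b i) x) | c. True}"
    and Wd: "W = {(\<lambda>\<omega>. \<Sum>j<L. a j * cc j \<omega>) | a. True}"
    and w: "w \<in> tensor V (trunc_space \<gamma> \<tau> W)"
  shows "\<exists>d. snd w = (\<lambda>x \<omega>. \<Sum>n\<in>{..<K}\<times>{..<L}. d n *\<^sub>R ((indicator {\<omega>. \<gamma> \<omega> \<le> \<tau>} \<omega> * cc (snd n) \<omega>) *\<^sub>R snd (b (fst n)) x))"
proof -
  obtain m \<phi> \<psi> where w': "w = tens m \<phi> \<psi>" "\<forall>i<m. \<phi> i \<in> V" "\<forall>i<m. \<psi> i \<in> trunc_space \<gamma> \<tau> W"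
    using w unfolding tensor_def by blast
  have "\<forall>i\<in>{..<m}. \<exists>\<alpha> \<beta>. snd (\<phi> i) = (\<lambda>x. \<Sum>k<K. \<alpha> k *\<^sub>R snd (b k) x) \<and>
      \<psi> i = (\<lambda>\<omega>. indicator {\<omega>. \<gamma> \<omega> \<le> \<tau>} \<omega> * (\<Sum>j<L. \<beta> j * cc j \<omega>))"
    using w'(2,3) unfolding Vd Wd trunc_space_def by fastforce
  then obtain \<alpha> where "\<forall>i\<in>{..<m}. \<exists>\<beta>. snd (\<phi> i) = (\<lambda>x. \<Sum>k<K. \<alpha> i k *\<^sub>R snd (b k) x) \<and>
      \<psi> i = (\<lambda>\<omega>. indicator {\<omega>. \<gamma> \<omega> \<le> \<tau>} \<omega> * (\<Sum>j<L. \<beta> j * cc j \<omega>))"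
    by (rule bchoice[elim_format]) blast
  then obtain \<beta> where \<alpha>\<beta>: "\<forall>i\<in>{..<m}. snd (\<phi> i) = (\<lambda>x. \<Sum>k<K. \<alpha> i k *\<^sub>R snd (b k) x) \<and>
      \<psi> i = (\<lambda>\<omega>. indicator {\<omega>. \<gamma> \<omega> \<le> \<tau>} \<omega> * (\<Sum>j<L. \<beta> i j * cc j \<omega>))"
    by (rule bchoice[elim_format]) blast
  define d where "d n = (\<Sum>i<m. \<alpha> i (fst n) * \<beta> i (snd n))" for n :: "nat \<times> nat"
  show ?thesis
  proof (intro exI[of _ d] ext)
    fix x \<omega>
    define Ind where "Ind = (indicator {\<omega>. \<gamma> \<omega> \<le> \<tau>} \<omega> :: real)"
    define T where "T i k j = (\<alpha> i k * \<beta> i j * (Ind * cc j \<omega>)) *\<^sub>R snd (b k) x" for i k j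
    have "snd w x \<omega> = (\<Sum>i<m. \<psi> i \<omega> *\<^sub>R snd (\<phi> i) x)" by (simp add: w'(1) tens_def)
    also have "\<dots> = (\<Sum>i<m. \<Sum>k<K. \<Sum>j<L. T i k j)"
    proof (intro sum.cong refl)
      fix i assume "i \<in> {..<m}"
      then have e: "snd (\<phi> i) x = (\<Sum>k<K. \<alpha> i k *\<^sub>R snd (b k) x)"
        "\<psi> i \<omega> = Ind * (\<Sum>j<L. \<beta> i j * cc j \<omega>)"
        using \<alpha>\<beta> by (auto simp: Ind_def)
      show "\<psi> i \<omega> *\<^sub>R snd (\<phi> i) x = (\<Sum>k<K. \<Sum>j<L. T i k j)"
        unfolding e T_def
        by (simp add: scaleR_sum_right scaleR_sum_left sum_distrib_left sum_distrib_right mult_ac)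
    qed
    also have "\<dots> = (\<Sum>k<K. \<Sum>i<m. \<Sum>j<L. T i k j)" by (rule sum.swap)
    also have "\<dots> = (\<Sum>k<K. \<Sum>j<L. \<Sum>i<m. T i k j)" by (rule sum.cong[OF refl]) (rule sum.swap)
    also have "\<dots> = (\<Sum>n\<in>{..<K}\<times>{..<L}. \<Sum>i<m. T i (fst n) (snd n))"
      by (subst sum.cartesian_product) (simp add: case_prod_beta')
    also have "\<dots> = (\<Sum>n\<in>{..<K}\<times>{..<L}. d n *\<^sub>R ((Ind * cc (snd n) \<omega>) *\<^sub>R snd (b (fst n)) x))"
      by (intro sum.cong refl) (simp add: T_def d_def scaleR_sum_left sum_distrib_right sum_distrib_left mult_ac)
    finally show "snd w x \<omega> = (\<Sum>n\<in>{..<K}\<times>{..<L}. d n *\<^sub>R ((indicator {\<omega>. \<gamma> \<omega> \<le> \<tau>} \<omega> * cc (snd n) \<omega>) *\<^sub>R snd (b (fst n)) x))"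
      by (simp add: Ind_def)
  qed
qed

lemma elementary_tensor_grad_square_finite:
  assumes "vg \<in> H10 D" "open D" "\<psi> \<in> L2 G"
  shows "(\<integral>\<^sup>+\<omega>. \<integral>\<^sup>+x. ennreal ((norm (\<psi> \<omega> *\<^sub>R snd vg x))\<^sup>2) \<partial>MD D \<partial>G) < \<infinity>"
proof -
  have [measurable]: "snd vg \<in> borel_measurable lborel" using assms(1) by (simp add: mem_H10_iff)
  have [measurable]: "\<psi> \<in> borel_measurable G" using assms(3) by (simp add: L2_def)
  have mg: "(\<lambda>x. ennreal ((norm (snd vg x))\<^sup>2)) \<in> borel_measurable (MD D)"
    by (rule borel_measurable_MD) measurable
  have "(\<integral>\<^sup>+\<omega>. \<integral>\<^sup>+x. ennreal ((norm (\<psi> \<omega> *\<^sub>R snd vg x))\<^sup>2) \<partial>MD D \<partial>G)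
      = (\<integral>\<^sup>+\<omega>. ennreal ((\<psi> \<omega>)\<^sup>2) * (\<integral>\<^sup>+x. ennreal ((norm (snd vg x))\<^sup>2) \<partial>MD D) \<partial>G)"
    by (simp add: power_mult_distrib ennreal_mult nn_integral_cmult[OF mg])
  also have "\<dots> = (\<integral>\<^sup>+\<omega>. ennreal ((\<psi> \<omega>)\<^sup>2) \<partial>G) * (\<integral>\<^sup>+x. ennreal ((norm (snd vg x))\<^sup>2) \<partial>MD D)"
    by (rule nn_integral_multc) measurable
  also have "\<dots> < \<infinity>"
    using assms(3) H10_grad_square_finite[OF assms(1,2)] by (simp add: L2_def ennreal_mult_less_top)
  finally show ?thesis .
qed

context galerkin_setting
begin

lemma energy_integrable_of_truncated:
  assumes mh: "(\<lambda>(x,\<omega>). h x \<omega>) \<in> borel_measurable (lborel \<Otimes>\<^sub>M G)"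
    and mk: "(\<lambda>(x,\<omega>). k x \<omega>) \<in> borel_measurable (lborel \<Otimes>\<^sub>M G)"
    and th: "\<And>x \<omega>. \<tau> < \<gamma> \<omega> \<Longrightarrow> h x \<omega> = 0" and tk: "\<And>x \<omega>. \<tau> < \<gamma> \<omega> \<Longrightarrow> k x \<omega> = 0"
    and fh: "(\<integral>\<^sup>+\<omega>. \<integral>\<^sup>+x. ennreal ((norm (h x \<omega>))\<^sup>2) \<partial>MD D \<partial>G) < \<infinity>"
    and fk: "(\<integral>\<^sup>+\<omega>. \<integral>\<^sup>+x. ennreal ((norm (k x \<omega>))\<^sup>2) \<partial>MD D \<partial>G) < \<infinity>"
    and tau: "0 \<le> \<tau>"
  shows "integrable MDG (energy_density C h k)"
proof -
  let ?f = "\<lambda>x \<omega>. ennreal \<tau> * ennreal ((norm (h x \<omega>))\<^sup>2) + ennreal \<tau> * ennreal ((norm (k x \<omega>))\<^sup>2)"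
  have nh: "(\<lambda>(x,\<omega>). ennreal ((norm (h x \<omega>))\<^sup>2)) \<in> borel_measurable (lborel \<Otimes>\<^sub>M G)"
    and nk: "(\<lambda>(x,\<omega>). ennreal ((norm (k x \<omega>))\<^sup>2)) \<in> borel_measurable (lborel \<Otimes>\<^sub>M G)"
    using mh mk by measurable
  have "AE \<omega> in G. AE x in MD D. ennreal \<bar>k x \<omega> \<bullet> (C x \<omega> *v h x \<omega>)\<bar> \<le> ?f x \<omega>"
    using C_le_\<gamma>
  proof eventually_elim
    case (elim \<omega>)
    moreover have "AE x in MD D. x \<in> D" by (rule AE_I2) simp
    ultimately show ?case
    proof eventually_elim
      case (elim x)
      have "\<bar>k x \<omega> \<bullet> (C x \<omega> *v h x \<omega>)\<bar> \<le> \<tau> * (norm (h x \<omega>))\<^sup>2 + \<tau> * (norm (k x \<omega>))\<^sup>2"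
      proof (cases "\<gamma> \<omega> \<le> \<tau>")
        case True
        then have "\<gamma> \<omega> * (norm v)\<^sup>2 \<le> \<tau> * (norm v)\<^sup>2" for v by (intro mult_right_mono) auto
        then have le: "v \<bullet> (C x \<omega> *v v) \<le> \<tau> * (norm v)\<^sup>2" for v using elim(1) order_trans by blast
        have nonneg: "0 \<le> \<tau> * (norm v)\<^sup>2" for v using tau by simp
        have "(h x \<omega> \<bullet> (C x \<omega> *v h x \<omega>) + k x \<omega> \<bullet> (C x \<omega> *v k x \<omega>)) / 2
            \<le> \<tau> * (norm (h x \<omega>))\<^sup>2 + \<tau> * (norm (k x \<omega>))\<^sup>2"
          using le[of "h x \<omega>"] le[of "k x \<omega>"] nonneg[of "h x \<omega>"] nonneg[of "k x \<omega>"]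
          by (simp add: field_simps)
        then show ?thesis using energy_abs_le[OF elim(2), of "k x \<omega>" \<omega> "h x \<omega>"] by linarith
      qed (use th tau in simp)
      then have "ennreal \<bar>k x \<omega> \<bullet> (C x \<omega> *v h x \<omega>)\<bar>
          \<le> ennreal (\<tau> * (norm (h x \<omega>))\<^sup>2 + \<tau> * (norm (k x \<omega>))\<^sup>2)"
        by (rule ennreal_leI)
      then show ?case using tau by (simp add: ennreal_plus ennreal_mult)
    qed
  qed
  then have "(\<integral>\<^sup>+\<omega>. \<integral>\<^sup>+x. ennreal \<bar>k x \<omega> \<bullet> (C x \<omega> *v h x \<omega>)\<bar> \<partial>MD D \<partial>G) \<le> (\<integral>\<^sup>+\<omega>. \<integral>\<^sup>+x. ?f x \<omega> \<partial>MD D \<partial>G)"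
    by (rule nn_integral_mono_AE[OF eventually_mono]) (rule nn_integral_mono_AE)
  also have "\<dots> = (\<integral>\<^sup>+z. ?f (fst z) (snd z) \<partial>MDG)"
    by (rule nn_integral_iterated) (use nh nk in measurable)
  also have "\<dots> = ennreal \<tau> * (\<integral>\<^sup>+z. ennreal ((norm (h (fst z) (snd z)))\<^sup>2) \<partial>MDG)
      + ennreal \<tau> * (\<integral>\<^sup>+z. ennreal ((norm (k (fst z) (snd z)))\<^sup>2) \<partial>MDG)"
    using measurable_MDG_of_lborel[OF nh] measurable_MDG_of_lborel[OF nk]
    by (subst nn_integral_add) (auto simp: nn_integral_cmult)
  also have "\<dots> = ennreal \<tau> * (\<integral>\<^sup>+\<omega>. \<integral>\<^sup>+x. ennreal ((norm (h x \<omega>))\<^sup>2) \<partial>MD D \<partial>G)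
      + ennreal \<tau> * (\<integral>\<^sup>+\<omega>. \<integral>\<^sup>+x. ennreal ((norm (k x \<omega>))\<^sup>2) \<partial>MD D \<partial>G)"
    using nn_integral_iterated[OF nh] nn_integral_iterated[OF nk] by simp
  also have "\<dots> < \<infinity>" using fh fk by (simp add: ennreal_mult_less_top)
  finally have "(\<integral>\<^sup>+\<omega>. \<integral>\<^sup>+x. ennreal \<bar>k x \<omega> \<bullet> (C x \<omega> *v h x \<omega>)\<bar> \<partial>MD D \<partial>G) < \<infinity>" .
  moreover have "(\<integral>\<^sup>+z. ennreal (norm (energy_density C h k z)) \<partial>MDG)
      = (\<integral>\<^sup>+\<omega>. \<integral>\<^sup>+x. ennreal \<bar>k x \<omega> \<bullet> (C x \<omega> *v h x \<omega>)\<bar> \<partial>MD D \<partial>G)"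
    by (subst nn_integral_iterated)
      (use energy_integrand_measurable[OF mh mk] in \<open>measurable, simp add: energy_density_def\<close>)
  ultimately show ?thesis
    unfolding integrable_iff_bounded using energy_density_measurable[OF mh mk] by simp
qed

lemma energy_density_sum_integrable:
  assumes "finite I" and int: "\<And>n m. n \<in> I \<Longrightarrow> m \<in> I \<Longrightarrow> integrable MDG (energy_density C (e n) (e m))"
  shows "integrable MDG (energy_density C (\<lambda>x \<omega>. \<Sum>n\<in>I. a n *\<^sub>R e n x \<omega>) (\<lambda>x \<omega>. \<Sum>m\<in>I. d m *\<^sub>R e m x \<omega>))"
    and "(\<integral>z. energy_density C (\<lambda>x \<omega>. \<Sum>n\<in>I. a n *\<^sub>R e n x \<omega>) (\<lambda>x \<omega>. \<Sum>m\<in>I. d m *\<^sub>R e m x \<omega>) z \<partial>MDG)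
      = (\<Sum>m\<in>I. \<Sum>n\<in>I. d m * a n * (\<integral>z. energy_density C (e n) (e m) z \<partial>MDG))"
  unfolding energy_density_sum[abs_def] using int
  by (auto intro!: Bochner_Integration.integrable_sum simp: Bochner_Integration.integral_sum)

lemma galerkin_sol_exists_span:
  assumes "finite I" and S: "S \<subseteq> Xspace D G" and u: "galerkin_sol D G C f (Xspace D G) u"
    and int: "\<And>n m. n \<in> I \<Longrightarrow> m \<in> I \<Longrightarrow> integrable MDG (energy_density C (e n) (e m))"
    and basis: "\<And>n. n \<in> I \<Longrightarrow> \<exists>W\<in>S. snd W = e n"
    and span: "\<And>a. \<exists>U\<in>S. snd U = (\<lambda>x \<omega>. \<Sum>n\<in>I. a n *\<^sub>R e n x \<omega>)"
    and spanning: "\<And>W. W \<in> S \<Longrightarrow> \<exists>d. snd W = (\<lambda>x \<omega>. \<Sum>n\<in>I. d n *\<^sub>R e n x \<omega>)"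
  shows "\<exists>U. galerkin_sol D G C f S U"
proof -
  let ?comb = "\<lambda>a x \<omega>. \<Sum>n\<in>I. a n *\<^sub>R e n x \<omega>"
  have au: "\<forall>W\<in>Xspace D G. a_integrable D G C u W \<and> a_form D G C u W = F_form G f W"
    using u by (simp add: galerkin_sol_def)
  define Gm where "Gm n m = (\<integral>z. energy_density C (e n) (e m) z \<partial>MDG)" for n m
  define Fv where "Fv m = (\<integral>z. energy_density C (snd u) (e m) z \<partial>MDG)" for m
  have "integrable MDG (energy_density C (snd u) (e m))" if m: "m \<in> I" for m
  proof -
    obtain W where "W \<in> S" "snd W = e m" using basis[OF m] by blast
    then have "a_integrable D G C u W" using S au by auto
    then show ?thesis using \<open>snd W = e m\<close> by (simp add: a_integrable_iff)
  qed
  then have load: "(\<integral>z. energy_density C (snd u) (?comb a) z \<partial>MDG) = (\<Sum>m\<in>I. a m * Fv m)" for a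
    unfolding energy_density_sum_right[abs_def] Fv_def by (simp add: Bochner_Integration.integral_sum)
  have gram: "(\<integral>z. energy_density C (?comb a) (?comb d) z \<partial>MDG) = (\<Sum>m\<in>I. \<Sum>n\<in>I. d m * a n * Gm n m)"
    for a d unfolding Gm_def by (rule energy_density_sum_integrable(2)[OF \<open>finite I\<close> int])
  have quadratic: "gram_quadratic I Gm a = (\<integral>z. energy_density C (?comb a) (?comb a) z \<partial>MDG)" for a
    unfolding gram gram_quadratic_def by (subst sum.swap) (simp add: mult_ac)
  have "\<forall>n m. Gm n m = Gm m n"
    unfolding Gm_def by (intro allI Bochner_Integration.integral_cong refl energy_density_commute)
  moreover have "\<forall>a. 0 \<le> gram_quadratic I Gm a"
    unfolding quadratic by (intro allI integral_nonneg_AE AE_I2 energy_density_nonneg)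
  moreover have "\<forall>a. gram_quadratic I Gm a = 0 \<longrightarrow> (\<Sum>m\<in>I. a m * Fv m) = 0"
  proof (intro allI impI)
    fix a assume "gram_quadratic I Gm a = 0"
    moreover have "integrable MDG (energy_density C (?comb a) (?comb a))"
      by (rule energy_density_sum_integrable(1)[OF \<open>finite I\<close> int])
    ultimately have "AE z in MDG. energy_density C (?comb a) (?comb a) z = 0"
      unfolding quadratic using integral_nonneg_eq_0_iff_AE by (auto intro: AE_I2 energy_density_nonneg)
    then have "AE z in MDG. energy_density C (snd u) (?comb a) z = 0"
      by (elim AE_mp) (auto intro!: AE_I2 dest!: energy_density_eq_0D simp: energy_density_def)
    then show "(\<Sum>m\<in>I. a m * Fv m) = 0" unfolding load[symmetric] by (rule integral_eq_zero_AE)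
  qed
  ultimately obtain a where sol: "\<forall>m\<in>I. (\<Sum>n\<in>I. a n * Gm n m) = Fv m"
    using gram_system_solvable[OF \<open>finite I\<close>] by blast
  obtain U where US: "U \<in> S" and U: "snd U = ?comb a" using span by blast
  have "galerkin_sol D G C f S U"
    unfolding galerkin_sol_def
  proof (intro conjI US ballI)
    fix W assume W: "W \<in> S"
    obtain d where d: "snd W = ?comb d" using spanning[OF W] by blast
    show "a_integrable D G C U W"
      unfolding a_integrable_iff U d by (rule energy_density_sum_integrable(1)[OF \<open>finite I\<close> int])
    then have "a_form D G C U W = (\<Sum>m\<in>I. d m * (\<Sum>n\<in>I. a n * Gm n m))"
      by (simp add: a_form_eq_integral U d gram sum_distrib_left mult_ac)
    also have "\<dots> = (\<integral>z. energy_density C (snd u) (snd W) z \<partial>MDG)"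
      using sol by (simp add: d load)
    also have "\<dots> = F_form G f W"
      using a_form_eq_integral[of u W] au S W by auto
    finally show "a_form D G C U W = F_form G f W" .
  qed
  then show ?thesis ..
qed

lemma truncated_elementary_energy_integrable:
  assumes "vg \<in> H10 D" "vg' \<in> H10 D" "\<psi> \<in> L2 G" "\<psi>' \<in> L2 G" "0 \<le> \<tau>"
  shows "integrable MDG (energy_density C
    (\<lambda>x \<omega>. (indicator {\<omega>. \<gamma> \<omega> \<le> \<tau>} \<omega> * \<psi> \<omega>) *\<^sub>R snd vg x)
    (\<lambda>x \<omega>. (indicator {\<omega>. \<gamma> \<omega> \<le> \<tau>} \<omega> * \<psi>' \<omega>) *\<^sub>R snd vg' x))"
proof -
  have m: "(\<lambda>(x,\<omega>). (indicator {\<omega>. \<gamma> \<omega> \<le> \<tau>} \<omega> * \<phi> \<omega>) *\<^sub>R snd wh x) \<in> borel_measurable (lborel \<Otimes>\<^sub>M G)"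
    if "wh \<in> H10 D" "\<phi> \<in> L2 G" for wh \<phi>
  proof -
    note \<gamma>_measurable[measurable]
    have [measurable]: "snd wh \<in> borel_measurable lborel" "\<phi> \<in> borel_measurable G"
      using that by (auto simp: mem_H10_iff L2_def)
    show ?thesis by measurable
  qed
  have f: "(\<integral>\<^sup>+\<omega>. \<integral>\<^sup>+x. ennreal ((norm ((indicator {\<omega>. \<gamma> \<omega> \<le> \<tau>} \<omega> * \<phi> \<omega>) *\<^sub>R snd wh x))\<^sup>2) \<partial>MD D \<partial>G) < \<infinity>"
    if "wh \<in> H10 D" "\<phi> \<in> L2 G" for wh \<phi>
  proof (rule elementary_tensor_grad_square_finite[OF that(1) open_D])
    show "(\<lambda>\<omega>. indicator {\<omega>. \<gamma> \<omega> \<le> \<tau>} \<omega> * \<phi> \<omega>) \<in> L2 G"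
      using trunc_space_subset_L2[OF \<gamma>_measurable, of "{\<phi>}" \<tau>] that(2) by (simp add: trunc_space_def)
  qed
  show ?thesis
    by (rule energy_integrable_of_truncated[OF m m _ _ f f]) (use assms in \<open>simp_all add: indicator_def\<close>)
qed

lemma galerkin_sol_exists:
  assumes V: "fd_subspace V" "V \<subseteq> H10 D" and W: "fd_fspace W" "W \<subseteq> L2 G"
    and u: "galerkin_sol D G C f (Xspace D G) u" and tau: "0 \<le> \<tau>"
  shows "\<exists>uN. galerkin_sol D G C f (tensor V (trunc_space \<gamma> \<tau> W)) uN"
proof -
  obtain K :: nat and b where Vb: "V = {(\<lambda>x. \<Sum>i<K. a i * fst (b i) x, \<lambda>x. \<Sum>i<K. a i *\<^sub>R snd (b i) x) | a. True}"
    using V(1) unfolding fd_subspace_def by blast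
  obtain L :: nat and c where Wc: "W = {(\<lambda>\<omega>. \<Sum>j<L. a j * c j \<omega>) | a. True}"
    using W(1) unfolding fd_fspace_def by blast
  let ?S = "tensor V (trunc_space \<gamma> \<tau> W)"
  define Ind where "Ind = (\<lambda>\<omega>. indicator {\<omega>. \<gamma> \<omega> \<le> \<tau>} \<omega> :: real)"
  define I where "I = {..<K} \<times> {..<L}"
  define e where "e n x \<omega> = (Ind \<omega> * c (snd n) \<omega>) *\<^sub>R snd (b (fst n)) x" for n x \<omega>
  have bV: "b k \<in> V" if "k < K" for k
    unfolding Vb using that
    by (intro CollectI exI[of _ "\<lambda>i. if i = k then 1 else 0"])
      (simp add: sum_delta_mult sum_delta_scaleR)
  have cW: "c j \<in> W" if "j < L" for j
    unfolding Wc using that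
    by (intro CollectI exI[of _ "\<lambda>i. if i = j then 1 else 0"]) (simp add: sum_delta_mult)
  have trunc: "(\<lambda>\<omega>. Ind \<omega> * \<psi> \<omega>) \<in> trunc_space \<gamma> \<tau> W" if "\<psi> \<in> W" for \<psi>
    using that unfolding trunc_space_def Ind_def by blast
  have basis: "\<exists>E\<in>?S. snd E = e n" if "n \<in> I" for n
  proof
    show "tens 1 (\<lambda>_. b (fst n)) (\<lambda>_ \<omega>. Ind \<omega> * c (snd n) \<omega>) \<in> ?S"
      unfolding tensor_def using bV cW trunc that I_def by fastforce
  qed (simp add: tens_def e_def fun_eq_iff)
  have span: "\<exists>U\<in>?S. snd U = (\<lambda>x \<omega>. \<Sum>n\<in>I. a n *\<^sub>R e n x \<omega>)" for a
  proof
    have "(\<lambda>\<omega>. \<Sum>j<L. a (k,j) * c j \<omega>) \<in> W" for k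
      unfolding Wc by (rule CollectI, rule exI[of _ "\<lambda>j. a (k,j)"]) simp
    then show "tens K b (\<lambda>k \<omega>. Ind \<omega> * (\<Sum>j<L. a (k,j) * c j \<omega>)) \<in> ?S"
      unfolding tensor_def using bV trunc by blast
    show "snd (tens K b (\<lambda>k \<omega>. Ind \<omega> * (\<Sum>j<L. a (k,j) * c j \<omega>))) = (\<lambda>x \<omega>. \<Sum>n\<in>I. a n *\<^sub>R e n x \<omega>)"
    proof (intro ext)
      fix x \<omega>
      have "snd (tens K b (\<lambda>k \<omega>. Ind \<omega> * (\<Sum>j<L. a (k,j) * c j \<omega>))) x \<omega>
          = (\<Sum>k<K. \<Sum>j<L. a (k,j) *\<^sub>R e (k,j) x \<omega>)"
        by (simp add: tens_def e_def scaleR_sum_left sum_distrib_left mult_ac)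
      also have "\<dots> = (\<Sum>n\<in>I. a n *\<^sub>R e n x \<omega>)"
        unfolding I_def by (subst sum.cartesian_product) (simp add: case_prod_beta')
      finally show "snd (tens K b (\<lambda>k \<omega>. Ind \<omega> * (\<Sum>j<L. a (k,j) * c j \<omega>))) x \<omega>
          = (\<Sum>n\<in>I. a n *\<^sub>R e n x \<omega>)" .
    qed
  qed
  have spanning: "\<exists>d. snd U = (\<lambda>x \<omega>. \<Sum>n\<in>I. d n *\<^sub>R e n x \<omega>)" if "U \<in> ?S" for U
    using tensor_trunc_space_grad_span[OF Vb Wc that] unfolding e_def I_def Ind_def .
  have int: "integrable MDG (energy_density C (e n) (e m))" if "n \<in> I" "m \<in> I" for n m
    unfolding e_def Ind_def using that bV cW V(2) W(2) tau
    by (intro truncated_elementary_energy_integrable) (auto simp: I_def)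
  show ?thesis
    by (rule galerkin_sol_exists_span[OF _ tensor_trunc_space_subset_Xspace[OF V(2) W(2)] u int basis span spanning])
      (simp add: I_def)
qed

end

section \<open>Density of the tensor spaces\<close>

lemma tensor_factor_approximation:
  assumes Vdn: "\<forall>vg\<in>H10 D. \<forall>\<epsilon>>0. \<exists>q. \<exists>wh\<in>V q. H1sq D (\<lambda>x. fst vg x - fst wh x, \<lambda>x. snd vg x - snd wh x) < ennreal \<epsilon>"
    and WL: "\<forall>p. W p \<subseteq> L2 G"
    and Wdn: "\<forall>\<psi>\<in>L2 G. \<forall>\<epsilon>>0. \<exists>p. \<exists>\<phi>\<in>W p. (\<integral>\<^sup>+\<omega>. ennreal ((\<psi> \<omega> - \<phi> \<omega>)\<^sup>2) \<partial>G) < ennreal \<epsilon>"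
    and \<theta>: "\<theta> \<in> Cc_inf D" "open D" and \<psi>: "\<psi> \<in> L2 G" and \<delta>: "0 < \<delta>"
  shows "\<exists>p c q w. c \<in> W p \<and> w \<in> V q \<and>
    (\<integral>\<^sup>+\<omega>. ennreal ((\<psi> \<omega> - c \<omega>)\<^sup>2) \<partial>G) * (\<integral>\<^sup>+x. ennreal ((norm (grad \<theta> x))\<^sup>2) \<partial>MD D) \<le> ennreal \<delta> \<and>
    (\<integral>\<^sup>+\<omega>. ennreal ((c \<omega>)\<^sup>2) \<partial>G) * (\<integral>\<^sup>+x. ennreal ((norm (grad \<theta> x - snd w x))\<^sup>2) \<partial>MD D) \<le> ennreal \<delta>"
proof -
  \<comment> \<open>first approximate \<psi>, then approximate \<theta> to an accuracy adapted to the size of c\<close>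
  define B where "B = (\<integral>\<^sup>+x. ennreal ((norm (grad \<theta> x))\<^sup>2) \<partial>MD D)"
  have "B < \<infinity>"
    using grad_square_le_H1sq[of D "(\<theta>, grad \<theta>)"] H1sq_Cc_inf_finite[OF \<theta>] by (simp add: B_def le_less_trans)
  have "\<delta> / (enn2real B + 1) > 0" using \<delta> by (simp add: add_nonneg_pos)
  then obtain p c where c: "c \<in> W p" "(\<integral>\<^sup>+\<omega>. ennreal ((\<psi> \<omega> - c \<omega>)\<^sup>2) \<partial>G) < ennreal (\<delta> / (enn2real B + 1))"
    using Wdn \<psi> by fastforce
  define A where "A = (\<integral>\<^sup>+\<omega>. ennreal ((c \<omega>)\<^sup>2) \<partial>G)"
  have "A < \<infinity>" using c(1) WL by (auto simp: A_def L2_def)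
  have "\<delta> / (enn2real A + 1) > 0" using \<delta> by (simp add: add_nonneg_pos)
  then obtain q w where w: "w \<in> V q"
    "H1sq D (\<lambda>x. \<theta> x - fst w x, \<lambda>x. grad \<theta> x - snd w x) < ennreal (\<delta> / (enn2real A + 1))"
    using Vdn Cc_inf_in_H10[OF \<theta>(1)] by fastforce
  have "(\<integral>\<^sup>+x. ennreal ((norm (grad \<theta> x - snd w x))\<^sup>2) \<partial>MD D) * A \<le> ennreal \<delta>"
    using grad_square_le_H1sq[of D "(\<lambda>x. \<theta> x - fst w x, \<lambda>x. grad \<theta> x - snd w x)"] w(2) \<open>A < \<infinity>\<close> \<delta>
    by (intro ennreal_mult_le_of_less_div) auto
  moreover have "(\<integral>\<^sup>+\<omega>. ennreal ((\<psi> \<omega> - c \<omega>)\<^sup>2) \<partial>G) * B \<le> ennreal \<delta>"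
    using c(2) \<open>B < \<infinity>\<close> \<delta> by (intro ennreal_mult_le_of_less_div) auto
  ultimately show ?thesis
    using c(1) w(1) unfolding A_def B_def by (intro exI conjI) (auto simp: mult.commute)
qed

lemma normXsq_tens_diff_le:
  assumes "\<forall>i<m. snd (\<phi> i) \<in> borel_measurable lborel \<and> snd (w i) \<in> borel_measurable lborel"
    and "\<forall>i<m. \<psi> i \<in> borel_measurable G \<and> c i \<in> borel_measurable G"
  shows "normXsq D G (pdiff (tens m \<phi> \<psi>) (tens m w c)) \<le>
    (\<Sum>i<m. ennreal (2 * real m) *
      ((\<integral>\<^sup>+\<omega>. ennreal ((\<psi> i \<omega> - c i \<omega>)\<^sup>2) \<partial>G) * (\<integral>\<^sup>+x. ennreal ((norm (snd (\<phi> i) x))\<^sup>2) \<partial>MD D)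
       + (\<integral>\<^sup>+\<omega>. ennreal ((c i \<omega>)\<^sup>2) \<partial>G) * (\<integral>\<^sup>+x. ennreal ((norm (snd (\<phi> i) x - snd (w i) x))\<^sup>2) \<partial>MD D)))"
proof -
  define g where "g i = snd (\<phi> i)" for i
  define A1 where "A1 i \<omega> = ennreal (2 * real m * (\<psi> i \<omega> - c i \<omega>)\<^sup>2)" for i \<omega>
  define A2 where "A2 i \<omega> = ennreal (2 * real m * (c i \<omega>)\<^sup>2)" for i \<omega>
  define a1 where "a1 i x = ennreal ((norm (g i x))\<^sup>2)" for i x
  define a2 where "a2 i x = ennreal ((norm (g i x - snd (w i) x))\<^sup>2)" for i x
  have mA: "A1 i \<in> borel_measurable G" "A2 i \<in> borel_measurable G"
    and ma: "a1 i \<in> borel_measurable (MD D)" "a2 i \<in> borel_measurable (MD D)" if "i < m" for i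
  proof -
    have [measurable]: "\<psi> i \<in> borel_measurable G" "c i \<in> borel_measurable G"
      "g i \<in> borel_measurable lborel" "snd (w i) \<in> borel_measurable lborel"
      using assms that by (auto simp: g_def)
    show "A1 i \<in> borel_measurable G" "A2 i \<in> borel_measurable G" unfolding A1_def A2_def by measurable
    show "a1 i \<in> borel_measurable (MD D)" "a2 i \<in> borel_measurable (MD D)"
      unfolding a1_def a2_def by (rule borel_measurable_MD, measurable)+
  qed
  have pointwise: "ennreal ((norm (snd (pdiff (tens m \<phi> \<psi>) (tens m w c)) x \<omega>))\<^sup>2)
      \<le> (\<Sum>i<m. A1 i \<omega> * a1 i x + A2 i \<omega> * a2 i x)" for x \<omega>
  proof -
    have "snd (pdiff (tens m \<phi> \<psi>) (tens m w c)) x \<omega>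
        = (\<Sum>i<m. (\<psi> i \<omega> - c i \<omega>) *\<^sub>R g i x + c i \<omega> *\<^sub>R (g i x - snd (w i) x))"
      by (simp add: pdiff_def tens_def g_def sum_subtractf[symmetric] sum.distrib[symmetric] algebra_simps)
    then have "(norm (snd (pdiff (tens m \<phi> \<psi>) (tens m w c)) x \<omega>))\<^sup>2
        \<le> real m * (\<Sum>i<m. (norm ((\<psi> i \<omega> - c i \<omega>) *\<^sub>R g i x + c i \<omega> *\<^sub>R (g i x - snd (w i) x)))\<^sup>2)"
      using power2_norm_sum_le[of _ "{..<m}"] by simp
    also have "\<dots> \<le> real m * (\<Sum>i<m. 2 * (\<psi> i \<omega> - c i \<omega>)\<^sup>2 * (norm (g i x))\<^sup>2
        + 2 * (c i \<omega>)\<^sup>2 * (norm (g i x - snd (w i) x))\<^sup>2)"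
      by (intro mult_left_mono sum_mono order_trans[OF power2_norm_add_le]) (auto simp: power_mult_distrib)
    also have "\<dots> = (\<Sum>i<m. (2 * real m * (\<psi> i \<omega> - c i \<omega>)\<^sup>2) * (norm (g i x))\<^sup>2
        + (2 * real m * (c i \<omega>)\<^sup>2) * (norm (g i x - snd (w i) x))\<^sup>2)"
      by (simp add: sum_distrib_left algebra_simps)
    finally have "ennreal ((norm (snd (pdiff (tens m \<phi> \<psi>) (tens m w c)) x \<omega>))\<^sup>2) \<le> ennreal \<dots>"
      by (rule ennreal_leI)
    also have "\<dots> = (\<Sum>i<m. A1 i \<omega> * a1 i x + A2 i \<omega> * a2 i x)"
      by (subst sum_ennreal[symmetric])
        (auto intro!: sum.cong simp: A1_def A2_def a1_def a2_def ennreal_mult ennreal_plus)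
    finally show ?thesis .
  qed
  have "normXsq D G (pdiff (tens m \<phi> \<psi>) (tens m w c))
      \<le> (\<integral>\<^sup>+\<omega>. \<integral>\<^sup>+x. (\<Sum>i<m. A1 i \<omega> * a1 i x + A2 i \<omega> * a2 i x) \<partial>MD D \<partial>G)"
    unfolding normXsq_def by (intro nn_integral_mono pointwise)
  also have "\<dots> = (\<integral>\<^sup>+\<omega>. (\<Sum>i<m. A1 i \<omega> * (\<integral>\<^sup>+x. a1 i x \<partial>MD D) + A2 i \<omega> * (\<integral>\<^sup>+x. a2 i x \<partial>MD D)) \<partial>G)"
    using ma by (intro nn_integral_cong, subst nn_integral_sum)
      (auto intro!: sum.cong simp: nn_integral_add nn_integral_cmult)
  also have "\<dots> = (\<Sum>i<m. (\<integral>\<^sup>+\<omega>. A1 i \<omega> \<partial>G) * (\<integral>\<^sup>+x. a1 i x \<partial>MD D) + (\<integral>\<^sup>+\<omega>. A2 i \<omega> \<partial>G) * (\<integral>\<^sup>+x. a2 i x \<partial>MD D))"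
    using mA by (subst nn_integral_sum) (auto intro!: sum.cong simp: nn_integral_add nn_integral_multc)
  also have "\<dots> = (\<Sum>i<m. ennreal (2 * real m) *
      ((\<integral>\<^sup>+\<omega>. ennreal ((\<psi> i \<omega> - c i \<omega>)\<^sup>2) \<partial>G) * (\<integral>\<^sup>+x. a1 i x \<partial>MD D)
       + (\<integral>\<^sup>+\<omega>. ennreal ((c i \<omega>)\<^sup>2) \<partial>G) * (\<integral>\<^sup>+x. a2 i x \<partial>MD D)))"
  proof (intro sum.cong refl)
    fix i assume "i \<in> {..<m}"
    then have [measurable]: "\<psi> i \<in> borel_measurable G" "c i \<in> borel_measurable G" using assms by auto
    have "(\<integral>\<^sup>+\<omega>. A1 i \<omega> \<partial>G) = ennreal (2 * real m) * (\<integral>\<^sup>+\<omega>. ennreal ((\<psi> i \<omega> - c i \<omega>)\<^sup>2) \<partial>G)"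
      "(\<integral>\<^sup>+\<omega>. A2 i \<omega> \<partial>G) = ennreal (2 * real m) * (\<integral>\<^sup>+\<omega>. ennreal ((c i \<omega>)\<^sup>2) \<partial>G)"
      unfolding A1_def A2_def by (subst nn_integral_cmult[symmetric], measurable, simp add: ennreal_mult)+
    then show "(\<integral>\<^sup>+\<omega>. A1 i \<omega> \<partial>G) * (\<integral>\<^sup>+x. a1 i x \<partial>MD D) + (\<integral>\<^sup>+\<omega>. A2 i \<omega> \<partial>G) * (\<integral>\<^sup>+x. a2 i x \<partial>MD D)
        = ennreal (2 * real m) * ((\<integral>\<^sup>+\<omega>. ennreal ((\<psi> i \<omega> - c i \<omega>)\<^sup>2) \<partial>G) * (\<integral>\<^sup>+x. a1 i x \<partial>MD D)
          + (\<integral>\<^sup>+\<omega>. ennreal ((c i \<omega>)\<^sup>2) \<partial>G) * (\<integral>\<^sup>+x. a2 i x \<partial>MD D))"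
      by (simp add: distrib_left mult.assoc)
  qed
  finally show ?thesis by (simp add: a1_def a2_def g_def)
qed

context galerkin_setting
begin

lemma normXsq_pdiff_le:
  assumes mu: "(\<lambda>(x,\<omega>). snd u x \<omega>) \<in> borel_measurable (lborel \<Otimes>\<^sub>M G)"
    and ms: "(\<lambda>(x,\<omega>). snd s x \<omega>) \<in> borel_measurable (lborel \<Otimes>\<^sub>M G)"
    and mv: "(\<lambda>(x,\<omega>). snd v x \<omega>) \<in> borel_measurable (lborel \<Otimes>\<^sub>M G)"
  shows "normXsq D G (pdiff u v) \<le> 2 * normXsq D G (pdiff u s) + 2 * normXsq D G (pdiff s v)"
proof -
  have m: "(\<lambda>(x,\<omega>). snd (pdiff a b) x \<omega>) \<in> borel_measurable (lborel \<Otimes>\<^sub>M G)"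
    if "(\<lambda>(x,\<omega>). snd a x \<omega>) \<in> borel_measurable (lborel \<Otimes>\<^sub>M G)"
      "(\<lambda>(x,\<omega>). snd b x \<omega>) \<in> borel_measurable (lborel \<Otimes>\<^sub>M G)" for a b
    using that by (simp add: pdiff_def case_prod_beta')
  let ?n = "\<lambda>a b z. ennreal ((norm (snd (pdiff a b) (fst z) (snd z)))\<^sup>2)"
  have n: "?n a b \<in> borel_measurable MDG"
    if "(\<lambda>(x,\<omega>). snd a x \<omega>) \<in> borel_measurable (lborel \<Otimes>\<^sub>M G)"
      "(\<lambda>(x,\<omega>). snd b x \<omega>) \<in> borel_measurable (lborel \<Otimes>\<^sub>M G)" for a b
  proof (rule measurable_compose[OF measurable_MDG_of_lborel[OF m[OF that]]])
    show "(\<lambda>y::real^'n. ennreal ((norm y)\<^sup>2)) \<in> borel_measurable borel" by measurable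
  qed
  have "normXsq D G (pdiff u v) \<le> (\<integral>\<^sup>+z. 2 * ?n u s z + 2 * ?n s v z \<partial>MDG)"
    unfolding normXsq_eq_nn_integral[OF m[OF mu mv]]
  proof (intro nn_integral_mono)
    fix z
    have "(norm (snd (pdiff u v) (fst z) (snd z)))\<^sup>2
        \<le> 2 * (norm (snd (pdiff u s) (fst z) (snd z)))\<^sup>2 + 2 * (norm (snd (pdiff s v) (fst z) (snd z)))\<^sup>2"
      using power2_norm_add_le[of "snd (pdiff u s) (fst z) (snd z)" "snd (pdiff s v) (fst z) (snd z)"]
      by (simp add: pdiff_def)
    then have "?n u v z \<le> ennreal (2 * (norm (snd (pdiff u s) (fst z) (snd z)))\<^sup>2
        + 2 * (norm (snd (pdiff s v) (fst z) (snd z)))\<^sup>2)"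
      by (rule ennreal_leI)
    then show "?n u v z \<le> 2 * ?n u s z + 2 * ?n s v z"
      by (simp add: ennreal_plus ennreal_mult)
  qed
  also have "\<dots> = 2 * (\<integral>\<^sup>+z. ?n u s z \<partial>MDG) + 2 * (\<integral>\<^sup>+z. ?n s v z \<partial>MDG)"
    using n[OF mu ms] n[OF ms mv] by (simp add: nn_integral_add nn_integral_cmult)
  also have "\<dots> = 2 * normXsq D G (pdiff u s) + 2 * normXsq D G (pdiff s v)"
    by (simp only: normXsq_eq_nn_integral[OF m[OF mu ms]] normXsq_eq_nn_integral[OF m[OF ms mv]])
  finally show ?thesis .
qed

lemma Cc_inf_tens_approximation:
  assumes VH: "\<forall>q. V q \<subseteq> H10 D" and Vmono: "\<forall>q. V q \<subseteq> V (Suc q)"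
    and Vdn: "\<forall>vg\<in>H10 D. \<forall>\<epsilon>>0. \<exists>q. \<exists>wh\<in>V q. H1sq D (\<lambda>x. fst vg x - fst wh x, \<lambda>x. snd vg x - snd wh x) < ennreal \<epsilon>"
    and WL: "\<forall>p. W p \<subseteq> L2 G" and Wmono: "\<forall>p. W p \<subseteq> W (Suc p)"
    and Wdn: "\<forall>\<psi>\<in>L2 G. \<forall>\<epsilon>>0. \<exists>p. \<exists>\<phi>\<in>W p. (\<integral>\<^sup>+\<omega>. ennreal ((\<psi> \<omega> - \<phi> \<omega>)\<^sup>2) \<partial>G) < ennreal \<epsilon>"
    and \<theta>: "\<And>i. i < m \<Longrightarrow> \<theta> i \<in> Cc_inf D" and \<psi>: "\<And>i. i < m \<Longrightarrow> \<psi> i \<in> L2 G" and \<epsilon>: "0 < \<epsilon>"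
  shows "\<exists>q p. \<exists>v\<in>tensor (V q) (W p). normXsq D G (pdiff (tens m (\<lambda>i. (\<theta> i, grad (\<theta> i))) \<psi>) v) \<le> ennreal \<epsilon>"
proof -
  define \<delta> where "\<delta> = \<epsilon> / (4 * (real m * real m + 1))"
  have pos: "0 < real m * real m + 1" by (simp add: add_nonneg_pos)
  then have \<delta>: "0 < \<delta>" unfolding \<delta>_def using \<epsilon> by simp
  define R where "R i p c q w \<longleftrightarrow> c \<in> W p \<and> w \<in> V q \<and>
    (\<integral>\<^sup>+\<omega>. ennreal ((\<psi> i \<omega> - c \<omega>)\<^sup>2) \<partial>G) * (\<integral>\<^sup>+x. ennreal ((norm (grad (\<theta> i) x))\<^sup>2) \<partial>MD D) \<le> ennreal \<delta> \<and>
    (\<integral>\<^sup>+\<omega>. ennreal ((c \<omega>)\<^sup>2) \<partial>G) * (\<integral>\<^sup>+x. ennreal ((norm (grad (\<theta> i) x - snd w x))\<^sup>2) \<partial>MD D) \<le> ennreal \<delta>"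
    for i p c q w
  have "\<exists>p c q w. R i p c q w" if i: "i < m" for i
    unfolding R_def by (rule tensor_factor_approximation[OF Vdn WL Wdn \<theta>[OF i] open_D \<psi>[OF i] \<delta>])
  then obtain P c Q w where "\<And>i. i < m \<Longrightarrow> R i (P i) (c i) (Q i) (w i)" by metis
  then have cw: "\<And>i. i < m \<Longrightarrow> c i \<in> W (P i) \<and> w i \<in> V (Q i) \<and>
    (\<integral>\<^sup>+\<omega>. ennreal ((\<psi> i \<omega> - c i \<omega>)\<^sup>2) \<partial>G) * (\<integral>\<^sup>+x. ennreal ((norm (grad (\<theta> i) x))\<^sup>2) \<partial>MD D) \<le> ennreal \<delta> \<and>
    (\<integral>\<^sup>+\<omega>. ennreal ((c i \<omega>)\<^sup>2) \<partial>G) * (\<integral>\<^sup>+x. ennreal ((norm (grad (\<theta> i) x - snd (w i) x))\<^sup>2) \<partial>MD D) \<le> ennreal \<delta>"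
    unfolding R_def by blast
  define p q where "p = Max (insert 0 (P ` {..<m}))" and "q = Max (insert 0 (Q ` {..<m}))"
  have "P i \<le> p" "Q i \<le> q" if "i < m" for i
    unfolding p_def q_def using that by (auto intro!: Max_ge)
  then have cW: "c i \<in> W p" and wV: "w i \<in> V q" if "i < m" for i
    using cw[OF that] that lift_Suc_mono_le[of W, OF Wmono[rule_format]] lift_Suc_mono_le[of V, OF Vmono[rule_format]]
    by blast+
  then have v: "tens m w c \<in> tensor (V q) (W p)" unfolding tensor_def by blast
  have "snd (w i) \<in> borel_measurable lborel" if "i < m" for i
  proof -
    have "w i \<in> H10 D" using wV[OF that] VH by blast
    then show ?thesis unfolding mem_H10_iff by blast
  qed
  then have "\<forall>i<m. snd (\<theta> i, grad (\<theta> i)) \<in> borel_measurable lborel \<and> snd (w i) \<in> borel_measurable lborel"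
    using Cc_inf_grad_borel_measurable[OF \<theta>] by simp
  moreover have "\<forall>i<m. \<psi> i \<in> borel_measurable G \<and> c i \<in> borel_measurable G"
    using \<psi> cW WL by (auto simp: L2_def subset_iff)
  ultimately have "normXsq D G (pdiff (tens m (\<lambda>i. (\<theta> i, grad (\<theta> i))) \<psi>) (tens m w c))
      \<le> (\<Sum>i<m. ennreal (2 * real m) * (ennreal \<delta> + ennreal \<delta>))"
    using cw by (intro order_trans[OF normXsq_tens_diff_le] sum_mono mult_left_mono add_mono) auto
  also have "\<dots> = (\<Sum>i<m. ennreal (4 * real m * \<delta>))"
    using \<delta> by (intro sum.cong refl) (simp add: ennreal_mult[symmetric] ennreal_plus[symmetric] del: ennreal_plus)
  also have "\<dots> = ennreal (real m * (4 * real m * \<delta>))"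
    using \<delta> by (subst sum_ennreal) auto
  also have "real m * (4 * real m * \<delta>) \<le> \<epsilon>"
  proof -
    have "real m * (4 * real m * \<delta>) = \<epsilon> * (real m * real m / (real m * real m + 1))"
      using pos by (simp add: \<delta>_def field_simps)
    also have "\<dots> \<le> \<epsilon> * 1" using \<epsilon> pos by (intro mult_left_mono) auto
    finally show ?thesis by simp
  qed
  finally show ?thesis using v by (auto simp: ennreal_leI)
qed

text \<open>Approximate u first by an element of the dense subspace built on test functions, then each of
  its finitely many factors within V q and W p.\<close>

lemma tensor_approximates_Xspace:
  assumes VH: "\<forall>q. V q \<subseteq> H10 D" and Vmono: "\<forall>q. V q \<subseteq> V (Suc q)"
    and Vdn: "\<forall>vg\<in>H10 D. \<forall>\<epsilon>>0. \<exists>q. \<exists>wh\<in>V q. H1sq D (\<lambda>x. fst vg x - fst wh x, \<lambda>x. snd vg x - snd wh x) < ennreal \<epsilon>"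
    and WL: "\<forall>p. W p \<subseteq> L2 G" and Wmono: "\<forall>p. W p \<subseteq> W (Suc p)"
    and Wdn: "\<forall>\<psi>\<in>L2 G. \<forall>\<epsilon>>0. \<exists>p. \<exists>\<phi>\<in>W p. (\<integral>\<^sup>+\<omega>. ennreal ((\<psi> \<omega> - \<phi> \<omega>)\<^sup>2) \<partial>G) < ennreal \<epsilon>"
    and uX: "u \<in> Xspace D G" and \<epsilon>: "0 < \<epsilon>"
  shows "\<exists>q p. \<exists>v\<in>tensor (V q) (W p). normXsq D G (pdiff u v) < ennreal \<epsilon>"
proof -
  from uX obtain S where S: "\<forall>k. S k \<in> tensor ((\<lambda>\<phi>. (\<phi>, grad \<phi>)) ` Cc_inf D) (L2 G)"
    and lim: "(\<lambda>k. Xfullsq D G (pdiff u (S k))) \<longlonglongrightarrow> 0"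
    unfolding Xspace_def by blast
  from order_tendstoD(2)[OF lim, of "ennreal (\<epsilon> / 4)"] \<epsilon>
  obtain k where k: "Xfullsq D G (pdiff u (S k)) < ennreal (\<epsilon> / 4)"
    by (auto simp: eventually_sequentially)
  obtain m \<theta> \<psi> where Sk: "S k = tens m (\<lambda>i. (\<theta> i, grad (\<theta> i))) \<psi>"
    and \<theta>: "\<And>i. i < m \<Longrightarrow> \<theta> i \<in> Cc_inf D" and \<psi>: "\<And>i. i < m \<Longrightarrow> \<psi> i \<in> L2 G"
  proof -
    obtain m \<phi> \<psi> where "S k = tens m \<phi> \<psi>" "\<forall>i<m. \<phi> i \<in> (\<lambda>\<phi>. (\<phi>, grad \<phi>)) ` Cc_inf D"
      "\<forall>i<m. \<psi> i \<in> L2 G"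
      using S unfolding tensor_def by blast
    moreover have "tens m \<phi> \<psi> = tens m (\<lambda>i. (fst (\<phi> i), grad (fst (\<phi> i)))) \<psi>"
      using calculation(2) by (auto simp: tens_def fun_eq_iff intro!: sum.cong)
    moreover have "fst (\<phi> i) \<in> Cc_inf D" if "i < m" for i using calculation(2) that by auto
    ultimately show ?thesis using that[of m "\<lambda>i. fst (\<phi> i)" \<psi>] by simp
  qed
  obtain q p v where v: "v \<in> tensor (V q) (W p)" and Sv: "normXsq D G (pdiff (S k) v) \<le> ennreal (\<epsilon> / 4)"
    using Cc_inf_tens_approximation[where m = m and \<theta> = \<theta> and \<psi> = \<psi> and \<epsilon> = "\<epsilon> / 4",
      OF VH Vmono Vdn WL Wmono Wdn \<theta> \<psi>] \<epsilon> Sk by auto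
  have "normXsq D G (pdiff u (S k)) \<le> Xfullsq D G (pdiff u (S k))"
    unfolding normXsq_def Xfullsq_def by (intro nn_integral_mono ennreal_leI) simp
  then have uS: "normXsq D G (pdiff u (S k)) < ennreal (\<epsilon> / 4)" using k by (rule le_less_trans)
  have "S k \<in> Xspace D G" unfolding Sk using \<theta> \<psi> by (intro tens_in_Xspace) (auto simp: Cc_inf_in_H10)
  moreover have "v \<in> Xspace D G" using tensor_subset_Xspace[OF VH[rule_format] WL[rule_format]] v by (rule subsetD)
  ultimately have "normXsq D G (pdiff u v) \<le> 2 * normXsq D G (pdiff u (S k)) + 2 * normXsq D G (pdiff (S k) v)"
    using uX by (intro normXsq_pdiff_le Xspace_grad_measurable)
  then have "normXsq D G (pdiff u v) < ennreal \<epsilon>"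
    using ennreal_double_add_less[OF Sv uS _ \<epsilon>] by blast
  then show ?thesis using v by blast
qed

lemma cut_above_energy_tendsto_0:
  assumes uX: "u \<in> Xspace D G" and int: "integrable MDG (energy_density C (snd u) (snd u))"
  shows "((\<lambda>\<tau>. normCsq D G C (cut_above \<gamma> \<tau> u)) \<longlongrightarrow> 0) at_top"
proof -
  have mu: "(\<lambda>(x,\<omega>). snd u x \<omega>) \<in> borel_measurable (lborel \<Otimes>\<^sub>M G)" by (rule Xspace_grad_measurable[OF uX])
  note \<gamma>_measurable[measurable] energy_density_measurable[OF mu mu, measurable]
  define s where "s \<tau> z = indicator {\<omega>. \<gamma> \<omega> > \<tau>} (snd z) * energy_density C (snd u) (snd u) z"
    for \<tau> :: real and z
  have ms: "s \<tau> \<in> borel_measurable MDG" for \<tau> unfolding s_def by measurable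
  have s_le: "norm (s \<tau> z) \<le> energy_density C (snd u) (snd u) z" if "z \<in> space MDG" for \<tau> z
    using energy_density_nonneg[OF that] by (simp add: s_def indicator_def)
  have s_integrable: "integrable MDG (s \<tau>)" for \<tau>
    by (rule Bochner_Integration.integrable_bound[OF int ms])
      (use s_le energy_density_nonneg in \<open>auto intro!: AE_I2\<close>)
  have eq: "normCsq D G C (cut_above \<gamma> \<tau> u) = ennreal (\<integral>z. s \<tau> z \<partial>MDG)" for \<tau>
  proof -
    have mc: "(\<lambda>(x,\<omega>). snd (cut_above \<gamma> \<tau> u) x \<omega>) \<in> borel_measurable (lborel \<Otimes>\<^sub>M G)"
      using mu by (simp add: cut_above_def case_prod_beta')
    have "normCsq D G C (cut_above \<gamma> \<tau> u) = (\<integral>\<^sup>+z. ennreal (s \<tau> z) \<partial>MDG)"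
      unfolding normCsq_eq_nn_integral[OF mc]
      by (intro nn_integral_cong) (simp add: s_def energy_density_def cut_above_def indicator_def)
    also have "\<dots> = ennreal (\<integral>z. s \<tau> z \<partial>MDG)"
      by (rule nn_integral_eq_integral[OF s_integrable]) (auto intro!: AE_I2 simp: s_def energy_density_nonneg)
    finally show ?thesis .
  qed
  \<comment> \<open>dominated convergence: s \<tau> vanishes pointwise once \<tau> exceeds \<gamma>, and is dominated by the energy density of u\<close>
  have "((\<lambda>\<tau>. \<integral>z. s \<tau> z \<partial>MDG) \<longlongrightarrow> (\<integral>z. 0 \<partial>MDG)) at_top"
  proof (rule integral_dominated_convergence_at_top[OF _ ms int])
    show "AE z in MDG. ((\<lambda>\<tau>. s \<tau> z) \<longlongrightarrow> 0) at_top"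
    proof (rule AE_I2, rule tendsto_eventually)
      fix z
      show "\<forall>\<^sub>F \<tau> in at_top. s \<tau> z = 0"
        unfolding eventually_at_top_linorder by (intro exI[of _ "\<gamma> (snd z)"]) (auto simp: s_def)
    qed
    show "\<forall>\<^sub>F \<tau> in at_top. AE z in MDG. norm (s \<tau> z) \<le> energy_density C (snd u) (snd u) z"
      using s_le by (intro always_eventually allI AE_I2) auto
  qed simp
  then have "((\<lambda>\<tau>. ennreal (\<integral>z. s \<tau> z \<partial>MDG)) \<longlongrightarrow> ennreal 0) at_top"
    by (intro tendsto_ennrealI) simp
  then show ?thesis unfolding eq by simp
qed

lemma galerkin_truncated_tendsto_0:
  assumes V: "\<forall>q. V q \<subseteq> H10 D" and W: "\<forall>p. W p \<subseteq> L2 G"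
    and u: "galerkin_sol D G C f (Xspace D G) u"
    and approx: "\<And>\<tau>. \<tau> > 0 \<Longrightarrow> \<exists>v\<in>tensor (V (qf \<tau>)) (W (pf \<tau>)). normXsq D G (pdiff u v) < ennreal (1 / \<tau>\<^sup>2)"
    and U: "\<forall>\<tau>>0. galerkin_sol D G C f (tensor (V (qf \<tau>)) (trunc_space \<gamma> \<tau> (W (pf \<tau>)))) (U \<tau>)"
  shows "((\<lambda>\<tau>. normCsq D G C (pdiff u (U \<tau>))) \<longlongrightarrow> 0) at_top"
proof (rule tendsto_sandwich[OF _ _ tendsto_const])
  show "\<forall>\<^sub>F \<tau> in at_top. normCsq D G C (pdiff u (U \<tau>)) \<le> ennreal (1 / \<tau>) + normCsq D G C (cut_above \<gamma> \<tau> u)"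
    unfolding eventually_at_top_linorder
  proof (intro exI[of _ 1] allI impI)
    fix \<tau> :: real assume "1 \<le> \<tau>"
    then have \<tau>: "\<tau> > 0" by simp
    obtain v where v: "v \<in> tensor (V (qf \<tau>)) (W (pf \<tau>))" "normXsq D G (pdiff u v) < ennreal (1 / \<tau>\<^sup>2)"
      using approx[OF \<tau>] by blast
    have "normCsq D G C (pdiff u (U \<tau>)) \<le> ennreal \<tau> * (INF v\<in>tensor (V (qf \<tau>)) (W (pf \<tau>)). normXsq D G (pdiff u v))
        + normCsq D G C (cut_above \<gamma> \<tau> u)"
      using V W u \<tau> U by (intro galerkin_error_bound) auto
    also have "ennreal \<tau> * (INF v\<in>tensor (V (qf \<tau>)) (W (pf \<tau>)). normXsq D G (pdiff u v)) \<le> ennreal \<tau> * ennreal (1 / \<tau>\<^sup>2)"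
      by (intro mult_left_mono order_trans[OF INF_lower[OF v(1)]]) (use v(2) in auto)
    also have "ennreal \<tau> * ennreal (1 / \<tau>\<^sup>2) = ennreal (1 / \<tau>)"
      using \<tau> by (simp add: ennreal_mult[symmetric] power2_eq_square)
    finally show "normCsq D G C (pdiff u (U \<tau>)) \<le> ennreal (1 / \<tau>) + normCsq D G C (cut_above \<gamma> \<tau> u)"
      by (simp add: add_right_mono)
  qed
  have "((\<lambda>\<tau>::real. ennreal (1 / \<tau>)) \<longlongrightarrow> ennreal 0) at_top"
    using tendsto_inverse_0_at_top[OF filterlim_ident] by (intro tendsto_ennrealI) (simp add: divide_inverse)
  moreover have "((\<lambda>\<tau>. normCsq D G C (cut_above \<gamma> \<tau> u)) \<longlongrightarrow> 0) at_top"
    using u by (intro cut_above_energy_tendsto_0) (auto simp: galerkin_sol_def a_integrable_iff)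
  ultimately show "((\<lambda>\<tau>. ennreal (1 / \<tau>) + normCsq D G C (cut_above \<gamma> \<tau> u)) \<longlongrightarrow> 0) at_top"
    using tendsto_add by force
qed simp

lemma tensor_approximation_indices:
  assumes "\<forall>q. V q \<subseteq> H10 D" "\<forall>q. V q \<subseteq> V (Suc q)"
    "\<forall>vg\<in>H10 D. \<forall>\<epsilon>>0. \<exists>q. \<exists>wh\<in>V q. H1sq D (\<lambda>x. fst vg x - fst wh x, \<lambda>x. snd vg x - snd wh x) < ennreal \<epsilon>"
    "\<forall>p. W p \<subseteq> L2 G" "\<forall>p. W p \<subseteq> W (Suc p)"
    "\<forall>\<psi>\<in>L2 G. \<forall>\<epsilon>>0. \<exists>p. \<exists>\<phi>\<in>W p. (\<integral>\<^sup>+\<omega>. ennreal ((\<psi> \<omega> - \<phi> \<omega>)\<^sup>2) \<partial>G) < ennreal \<epsilon>"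
    and "u \<in> Xspace D G"
  obtains qf pf where
    "\<And>\<tau>. \<tau> > 0 \<Longrightarrow> \<exists>v\<in>tensor (V (qf \<tau>)) (W (pf \<tau>)). normXsq D G (pdiff u v) < ennreal (1 / \<tau>\<^sup>2)"
proof -
  define close where "close \<tau> q p \<longleftrightarrow> (\<exists>v\<in>tensor (V q) (W p). normXsq D G (pdiff u v) < ennreal (1 / \<tau>\<^sup>2))"
    for \<tau> :: real and q p
  have "\<exists>q p. close \<tau> q p" if "\<tau> > 0" for \<tau>
    unfolding close_def using tensor_approximates_Xspace[OF assms] that by simp
  then obtain qf pf where "\<And>\<tau>. \<tau> > 0 \<Longrightarrow> close \<tau> (qf \<tau>) (pf \<tau>)" by metis
  then show ?thesis using that unfolding close_def by blast
qed

end

theorem proposition10: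
  fixes D :: "(real^'n::finite) set"
    and \<Gamma>1 :: "(real^'g::finite) measure" and \<Gamma>2 :: "(real^'v::finite) measure"
    and C :: "real^'n \<Rightarrow> (real^'g) \<times> (real^'v) \<Rightarrow> real^'n^'n"
    and \<alpha> :: real and \<gamma> :: "(real^'g) \<times> (real^'v) \<Rightarrow> real"
    and f :: "(real^'n \<Rightarrow> real) \<Rightarrow> (real^'n \<Rightarrow> real^'n) \<Rightarrow> real"
    and V :: "nat \<Rightarrow> ((real^'n \<Rightarrow> real) \<times> (real^'n \<Rightarrow> real^'n)) set"
    and W :: "nat \<Rightarrow> ((real^'g) \<times> (real^'v) \<Rightarrow> real) set"
    and u :: "('n, (real^'g) \<times> (real^'v)) field"
  assumes D: "bounded D" "open D" "smooth_boundary D"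
    and G1: "prob_space \<Gamma>1" "sets \<Gamma>1 = sets borel"
    and G2: "prob_space \<Gamma>2" "sets \<Gamma>2 = sets borel"
    and f: "H_minus1 D f"
    and C_meas: "(\<lambda>(x, \<omega>). C x \<omega>) \<in> borel_measurable (lborel \<Otimes>\<^sub>M (\<Gamma>1 \<Otimes>\<^sub>M \<Gamma>2))"
    and C_spd: "\<forall>x\<in>D. \<forall>\<omega>. transpose (C x \<omega>) = C x \<omega> \<and> (\<forall>h. h \<noteq> 0 \<longrightarrow> h \<bullet> (C x \<omega> *v h) > 0)"
    and alpha: "\<alpha> > 0"
    and gamma: "\<gamma> \<in> borel_measurable (\<Gamma>1 \<Otimes>\<^sub>M \<Gamma>2)" "\<forall>\<omega>. \<gamma> \<omega> > 0"
    and ellip: "AE \<omega> in \<Gamma>1 \<Otimes>\<^sub>M \<Gamma>2. AE x in lborel. x \<in> D \<longrightarrow>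
                 (\<forall>h. \<alpha> * (norm h)\<^sup>2 \<le> h \<bullet> (C x \<omega> *v h) \<and> h \<bullet> (C x \<omega> *v h) \<le> \<gamma> \<omega> * (norm h)\<^sup>2)"
    and V: "\<forall>q. fd_subspace (V q) \<and> V q \<subseteq> H10 D" "\<forall>q. V q \<subseteq> V (Suc q)"
           "\<forall>vg\<in>H10 D. \<forall>\<epsilon>>0. \<exists>q. \<exists>wh\<in>V q.
              H1sq D (\<lambda>x. fst vg x - fst wh x, \<lambda>x. snd vg x - snd wh x) < ennreal \<epsilon>"
    and W: "\<forall>p. fd_fspace (W p) \<and> W p \<subseteq> L2 (\<Gamma>1 \<Otimes>\<^sub>M \<Gamma>2)" "\<forall>p. W p \<subseteq> W (Suc p)"
           "\<forall>\<psi>\<in>L2 (\<Gamma>1 \<Otimes>\<^sub>M \<Gamma>2). \<forall>\<epsilon>>0. \<exists>p. \<exists>\<phi>\<in>W p.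
              (\<integral>\<^sup>+ \<omega>. ennreal ((\<psi> \<omega> - \<phi> \<omega>)\<^sup>2) \<partial>(\<Gamma>1 \<Otimes>\<^sub>M \<Gamma>2)) < ennreal \<epsilon>"
    and u: "galerkin_sol D (\<Gamma>1 \<Otimes>\<^sub>M \<Gamma>2) C f (Xspace D (\<Gamma>1 \<Otimes>\<^sub>M \<Gamma>2)) u"
  shows "(\<forall>\<tau>>0. \<forall>q p uN.
            galerkin_sol D (\<Gamma>1 \<Otimes>\<^sub>M \<Gamma>2) C f (tensor (V q) (trunc_space \<gamma> \<tau> (W p))) uN \<longrightarrow>
            normCsq D (\<Gamma>1 \<Otimes>\<^sub>M \<Gamma>2) C (pdiff u uN)
              \<le> ennreal \<tau> * (INF v\<in>tensor (V q) (W p). normXsq D (\<Gamma>1 \<Otimes>\<^sub>M \<Gamma>2) (pdiff u v))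
                + normCsq D (\<Gamma>1 \<Otimes>\<^sub>M \<Gamma>2) C (cut_above \<gamma> \<tau> u))
       \<and> (\<exists>qf pf :: real \<Rightarrow> nat.
            (\<forall>\<tau>>0. \<exists>uN. galerkin_sol D (\<Gamma>1 \<Otimes>\<^sub>M \<Gamma>2) C f
                          (tensor (V (qf \<tau>)) (trunc_space \<gamma> \<tau> (W (pf \<tau>)))) uN) \<and>
            (\<forall>U. (\<forall>\<tau>>0. galerkin_sol D (\<Gamma>1 \<Otimes>\<^sub>M \<Gamma>2) C f
                          (tensor (V (qf \<tau>)) (trunc_space \<gamma> \<tau> (W (pf \<tau>)))) (U \<tau>)) \<longrightarrow>
                 ((\<lambda>\<tau>. normCsq D (\<Gamma>1 \<Otimes>\<^sub>M \<Gamma>2) C (pdiff u (U \<tau>))) \<longlongrightarrow> 0) at_top))"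
proof -
  let ?G = "\<Gamma>1 \<Otimes>\<^sub>M \<Gamma>2"
  have "AE \<omega> in ?G. AE x in MD D. \<forall>h. h \<bullet> (C x \<omega> *v h) \<le> \<gamma> \<omega> * (norm h)\<^sup>2"
    using ellip unfolding AE_MD_iff[OF D(2)] by eventually_elim (auto elim: eventually_mono)
  then interpret galerkin_setting D ?G C \<gamma>
    by (intro galerkin_setting.intro D(2) prob_space_pair G1(1) G2(1) C_meas C_spd gamma(1))
  have VH: "\<forall>q. V q \<subseteq> H10 D" and WL: "\<forall>p. W p \<subseteq> L2 ?G" using V(1) W(1) by auto
  have uX: "u \<in> Xspace D ?G" using u by (simp add: galerkin_sol_def)
  obtain qf pf where approx:
    "\<And>\<tau>. \<tau> > 0 \<Longrightarrow> \<exists>v\<in>tensor (V (qf \<tau>)) (W (pf \<tau>)). normXsq D ?G (pdiff u v) < ennreal (1 / \<tau>\<^sup>2)"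
    by (rule tensor_approximation_indices[OF VH V(2,3) WL W(2,3) uX]) blast
  have "normCsq D ?G C (pdiff u uN)
      \<le> ennreal \<tau> * (INF v\<in>tensor (V q) (W p). normXsq D ?G (pdiff u v)) + normCsq D ?G C (cut_above \<gamma> \<tau> u)"
    if "\<tau> > 0" "galerkin_sol D ?G C f (tensor (V q) (trunc_space \<gamma> \<tau> (W p))) uN" for \<tau> q p uN
    using that VH WL u by (intro galerkin_error_bound) auto
  moreover have "\<exists>uN. galerkin_sol D ?G C f (tensor (V (qf \<tau>)) (trunc_space \<gamma> \<tau> (W (pf \<tau>)))) uN"
    if "\<tau> > 0" for \<tau>
    using that V(1) W(1) u by (intro galerkin_sol_exists) auto
  moreover have "((\<lambda>\<tau>. normCsq D ?G C (pdiff u (U \<tau>))) \<longlongrightarrow> 0) at_top"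
    if "\<forall>\<tau>>0. galerkin_sol D ?G C f (tensor (V (qf \<tau>)) (trunc_space \<gamma> \<tau> (W (pf \<tau>)))) (U \<tau>)" for U
    by (rule galerkin_truncated_tendsto_0[OF VH WL u approx that])
  ultimately show ?thesis by blast
qed

end
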